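(* Let $n=2$ and $\phi=|\cdot|_1$, so that $W_\phi=[-1,1]^2$. Let $B=\{x\in\mathbb{R}^2: |x|_2\le1\}$, $f=\chi_B$, and let $\lambda>2\sqrt2$. Put $s=1/\lambda$, $h=\sqrt{1-s^2}$ and $U=B\cap[-h,h]^2$. Then $u=\chi_U$ is a minimizer of $E(\cdot\,;f,\lambda)=\mathrm{TV}_{|\cdot|_1}(\cdot)+\lambda\|\cdot-f\|_{L^1(\mathbb{R}^2)}$ over $BV(\mathbb{R}^2)$.
   Context: For $u\in BV(\mathbb{R}^2)$, $\mathrm{TV}_{|\cdot|_1}(u)=\sup\{-\int_{\mathbb{R}^2}u\,\nabla\cdot\varphi : \varphi\in C^1_c(\mathbb{R}^2;\mathbb{R}^2),\ |\varphi(x)|_\infty\le1\ \forall x\}$; for a bounded Lipschitz set $U$ this equals $\int_{\partial U}|\nu|_1\,d\mathcal{H}^1$ with $\nu$ the outward unit normal. *)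

theory Defs
  imports "HOL-Analysis.Analysis"
begin

definition C1c_field :: "(real^2 \<Rightarrow> real^2) \<Rightarrow> bool" where
  "C1c_field \<phi> \<longleftrightarrow>
     (\<exists>D :: real^2 \<Rightarrow> ((real^2) \<Rightarrow>\<^sub>L (real^2)).
        (\<forall>x. (\<phi> has_derivative blinfun_apply (D x)) (at x)) \<and> continuous_on UNIV D) \<and>
     compact (closure {x. \<phi> x \<noteq> 0})"

definition divergence :: "(real^2 \<Rightarrow> real^2) \<Rightarrow> real^2 \<Rightarrow> real" where
  "divergence \<phi> x = (\<Sum>i\<in>UNIV. (frechet_derivative \<phi> (at x) (axis i 1)) $ i)"

text \<open>Anisotropic total variation for phi = l1 norm: dual constraint is |phi(x)|_inf <= 1.\<close>
definition TV1 :: "(real^2 \<Rightarrow> real) \<Rightarrow> ereal" where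
  "TV1 u = (SUP \<phi>\<in>{\<phi>. C1c_field \<phi> \<and> (\<forall>x i. \<bar>\<phi> x $ i\<bar> \<le> 1)}.
              ereal (- (\<integral>x. u x * divergence \<phi> x \<partial>lebesgue)))"

definition BV :: "(real^2 \<Rightarrow> real) \<Rightarrow> bool" where
  "BV u \<longleftrightarrow> integrable lebesgue u \<and> TV1 u < \<infinity>"

definition energy :: "(real^2 \<Rightarrow> real) \<Rightarrow> (real^2 \<Rightarrow> real) \<Rightarrow> real \<Rightarrow> ereal" where
  "energy u f lam = TV1 u + ereal (lam * (\<integral>x. \<bar>u x - f x\<bar> \<partial>lebesgue))"

end

theory Submission
  imports Defs
begin

text \<open>
  If \<open>z\<close> is an admissible field (\<open>C\<^sup>1\<close>, compactly supported, \<open>|z|\<^sub>\<infinity> \<le> 1\<close>) with \<open>|div z| \<le> \<lambda>\<close>, then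
  pointwise \<open>-f div z \<le> -v div z + \<lambda> |v - f|\<close>, hence \<open>E(v; f, \<lambda>) \<ge> -\<integral> f div z\<close> for every \<open>v\<close>.
  With \<open>s = 1/\<lambda>\<close> take \<open>z\<^sub>i(x) = -clamp(x\<^sub>i / A(x\<^sub>j))\<close>, where \<open>A = 2s\<close> near the axis \<open>x\<^sub>j = 0\<close> and
  \<open>A = s\<close> away from it (all corners smoothed at scale \<open>d\<close>). Both terms of \<open>-div z\<close> are active only
  near the origin, where each is \<open>1/(2s)\<close>, so \<open>|div z| \<le> 1/s = \<lambda>\<close>. Slicing \<open>U\<close> along horizontal and
  vertical chords, on which \<open>z\<close> is saturated at the endpoints, gives \<open>-\<integral>\<^sub>U div z \<approx> 8h\<close>; on the caps
  \<open>B - U\<close> one coordinate exceeds \<open>h\<close>, so the other is below \<open>s\<close> and \<open>-div z = 1/s\<close>. Hence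
  \<open>E(v) \<ge> 8h + \<lambda> |B - U|\<close> as \<open>d \<rightarrow> 0\<close>, while the same slicing shows \<open>TV(\<chi>\<^sub>U) \<le> 8h\<close>.
\<close>

section \<open>Slicing integrals over the plane\<close>

definition hline :: "real \<times> real \<Rightarrow> real^2" where
  "hline p = (\<chi> k. if k = 1 then snd p else fst p)"

definition vline :: "real \<times> real \<Rightarrow> real^2" where
  "vline p = (\<chi> k. if k = 2 then snd p else fst p)"

lemma hline_nth [simp]: "hline p $ 1 = snd p" "hline p $ 2 = fst p"
  by (auto simp: hline_def)

lemma vline_nth [simp]: "vline p $ 2 = snd p" "vline p $ 1 = fst p"
  by (auto simp: vline_def)

lemma exhaust_2_cases: "(i::2) = 1 \<or> i = 2"
  using exhaust_2 by metis

lemma vec2_eq_iff: "(x::real^2) = y \<longleftrightarrow> x$1 = y$1 \<and> x$2 = y$2"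
  by (auto simp: vec_eq_iff forall_2)

lemma hline_eq: "hline (y, t) = hline (y, 0) + t *\<^sub>R axis 1 1"
  by (simp add: vec2_eq_iff axis_def)

lemma vline_eq: "vline (y, t) = vline (y, 0) + t *\<^sub>R axis 2 1"
  by (simp add: vec2_eq_iff axis_def)

lemma continuous_on_hline: "continuous_on UNIV hline"
  unfolding hline_def
proof (rule continuous_on_vec_lambda)
  show "continuous_on UNIV (\<lambda>p. if k = 1 then snd p else fst p)" for k
    by (cases "k = 1") (simp_all add: continuous_on_fst continuous_on_snd)
qed

lemma continuous_on_vline: "continuous_on UNIV vline"
  unfolding vline_def
proof (rule continuous_on_vec_lambda)
  show "continuous_on UNIV (\<lambda>p. if k = 2 then snd p else fst p)" for k
    by (cases "k = 2") (simp_all add: continuous_on_fst continuous_on_snd)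
qed

lemma hline_measurable: "hline \<in> borel_measurable (lborel \<Otimes>\<^sub>M lborel)"
  unfolding lborel_prod measurable_lborel2
  using continuous_on_hline by (rule borel_measurable_continuous_onI)

lemma vline_measurable: "vline \<in> borel_measurable (lborel \<Otimes>\<^sub>M lborel)"
  unfolding lborel_prod measurable_lborel2
  using continuous_on_vline by (rule borel_measurable_continuous_onI)

lemma box_cart2: "box (l::real^2) u = {x. l$1 < x$1 \<and> x$1 < u$1 \<and> l$2 < x$2 \<and> x$2 < u$2}"
  by (auto simp: mem_box_cart forall_2)

lemma Basis_cart2: "(Basis :: (real^2) set) = {axis 1 1, axis 2 1}"
  by (auto simp: Basis_vec_def UNIV_2)

lemma prod_Basis_cart2: "(\<Prod>b\<in>(Basis :: (real^2) set). f b) = f (axis 1 1) * f (axis 2 1)"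
proof -
  have "axis 1 (1::real) \<noteq> (axis 2 1 :: real^2)"
    by (simp add: axis_eq_axis)
  then show ?thesis
    unfolding Basis_cart2 by simp
qed

lemma distr_lborel_hline: "distr (lborel \<Otimes>\<^sub>M lborel) borel hline = lborel"
proof (rule lborel_eqI[symmetric])
  fix l u :: "real^2"
  assume le: "\<And>b. b \<in> Basis \<Longrightarrow> l \<bullet> b \<le> u \<bullet> b"
  have "hline -` box l u \<inter> space (lborel \<Otimes>\<^sub>M lborel) = box (l$2) (u$2) \<times> box (l$1) (u$1)"
    by (auto simp: box_cart2 space_pair_measure)
  then show "emeasure (distr (lborel \<Otimes>\<^sub>M lborel) borel hline) (box l u) = (\<Prod>b\<in>Basis. (u - l) \<bullet> b)"
    using le[of "axis 1 1"] le[of "axis 2 1"] unfolding prod_Basis_cart2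
    by (simp add: emeasure_distr lborel.emeasure_pair_measure_Times inner_axis Basis_cart2
        ennreal_mult' mult.commute hline_measurable)
qed simp

lemma distr_lborel_vline: "distr (lborel \<Otimes>\<^sub>M lborel) borel vline = lborel"
proof (rule lborel_eqI[symmetric])
  fix l u :: "real^2"
  assume le: "\<And>b. b \<in> Basis \<Longrightarrow> l \<bullet> b \<le> u \<bullet> b"
  have "vline -` box l u \<inter> space (lborel \<Otimes>\<^sub>M lborel) = box (l$1) (u$1) \<times> box (l$2) (u$2)"
    by (auto simp: box_cart2 space_pair_measure)
  then show "emeasure (distr (lborel \<Otimes>\<^sub>M lborel) borel vline) (box l u) = (\<Prod>b\<in>Basis. (u - l) \<bullet> b)"
    using le[of "axis 1 1"] le[of "axis 2 1"] unfolding prod_Basis_cart2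
    by (simp add: emeasure_distr lborel.emeasure_pair_measure_Times inner_axis Basis_cart2
        ennreal_mult' mult.commute vline_measurable)
qed simp

lemma mem_cbox_vector2:
  fixes x :: "real^2"
  shows "x \<in> cbox (vector [a, b]) (vector [c, e]) \<longleftrightarrow> a \<le> x$1 \<and> x$1 \<le> c \<and> b \<le> x$2 \<and> x$2 \<le> e"
  by (auto simp: mem_box_cart forall_2)

lemma measure_cbox_vector2:
  "a \<le> c \<Longrightarrow> b \<le> e \<Longrightarrow> measure lborel (cbox (vector [a, b]) (vector [c, e]) :: (real^2) set) = (c - a) * (e - b)"
  unfolding measure_lborel_cbox_eq prod_Basis_cart2 by (simp add: Basis_cart2 inner_axis)

lemma integrable_lebesgue_indicator:
  assumes "A \<in> fmeasurable lborel"
  shows "integrable lebesgue (indicator A :: 'a::euclidean_space \<Rightarrow> real)"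
proof -
  have "integrable lborel (indicator A :: 'a \<Rightarrow> real)"
    using assms by (intro integrable_real_indicator) (auto simp: fmeasurable_def)
  then show ?thesis
    using assms by (simp add: integrable_completion fmeasurableD)
qed

lemma integrable_indicator_times_continuous:
  fixes g :: "real^2 \<Rightarrow> real"
  assumes "compact R" "continuous_on UNIV g"
  shows "integrable lebesgue (\<lambda>x. indicator R x * g x)"
proof -
  have "(\<lambda>x. indicator R x * g x) \<in> borel_measurable borel"
    using assms
    by (intro borel_measurable_times borel_measurable_indicator borel_measurable_continuous_onI)
      (auto intro: borel_compact)
  moreover have "integrable lborel (\<lambda>x. indicator R x * g x)"
    using borel_integrable_compact[OF assms(1), of g] assms(2) by (simp add: continuous_on_subset)
  ultimately show ?thesis
    by (simp add: integrable_completion)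
qed

text \<open>Fubini along the lines \<open>t \<mapsto> e (y, t)\<close>, then the fundamental theorem of calculus on
  each chord \<open>[-w y, w y]\<close> of \<open>R\<close>.\<close>

lemma integral_derivative_by_slices:
  fixes e :: "real \<times> real \<Rightarrow> real^2" and g g' :: "real^2 \<Rightarrow> real" and R :: "(real^2) set"
  assumes distr_e: "distr (lborel \<Otimes>\<^sub>M lborel) borel e = lborel"
    and e_meas: "e \<in> borel_measurable (lborel \<Otimes>\<^sub>M lborel)"
    and e_cont: "continuous_on UNIV e"
    and deriv: "\<And>y t. ((\<lambda>t. g (e (y, t))) has_real_derivative g' (e (y, t))) (at t)"
    and g'_cont: "continuous_on UNIV g'"
    and R: "compact R"
    and chord: "\<And>y t. e (y, t) \<in> R \<longleftrightarrow> \<bar>y\<bar> \<le> H \<and> \<bar>t\<bar> \<le> w y"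
    and w_nonneg: "\<And>y. \<bar>y\<bar> \<le> H \<Longrightarrow> 0 \<le> w y"
  shows "(\<integral>x. indicator R x * g' x \<partial>lebesgue)
       = (\<integral>y. indicator {-H..H} y * (g (e (y, w y)) - g (e (y, - w y))) \<partial>lborel)"
proof -
  let ?f = "\<lambda>x. indicator R x * g' x"
  have f_meas: "?f \<in> borel_measurable borel"
    using R g'_cont
    by (intro borel_measurable_times borel_measurable_indicator borel_measurable_continuous_onI)
      (auto intro: borel_compact)
  have "integrable (distr (lborel \<Otimes>\<^sub>M lborel) borel e) ?f"
    using borel_integrable_compact[OF R, of g'] g'_cont distr_e by (simp add: continuous_on_subset)
  then have f_int: "integrable (lborel \<Otimes>\<^sub>M lborel) (\<lambda>p. ?f (e p))"
    using f_meas e_meas by (subst (asm) integrable_distr_eq) auto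
  have chord_integral: "(\<integral>t. ?f (e (y, t)) \<partial>lborel)
      = indicator {-H..H} y * (g (e (y, w y)) - g (e (y, - w y)))" for y
  proof (cases "\<bar>y\<bar> \<le> H")
    case True
    have "continuous_on UNIV (\<lambda>t. g' (e (y, t)))"
      by (intro continuous_on_compose2[OF g'_cont] continuous_on_compose2[OF e_cont])
        (auto intro!: continuous_intros)
    then have "(\<integral>t. g' (e (y, t)) * indicator {- w y .. w y} t \<partial>lborel) = g (e (y, w y)) - g (e (y, - w y))"
      using w_nonneg[OF True] deriv
      by (intro integral_FTC_Icc_real) (auto simp: continuous_on_eq_continuous_at)
    moreover have "(\<integral>t. ?f (e (y, t)) \<partial>lborel) = (\<integral>t. g' (e (y, t)) * indicator {- w y .. w y} t \<partial>lborel)"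
      using True by (intro Bochner_Integration.integral_cong) (auto simp: chord indicator_def abs_le_iff)
    ultimately show ?thesis
      using True by (simp add: indicator_def abs_le_iff)
  next
    case False
    then show ?thesis
      by (auto simp: chord indicator_def abs_le_iff)
  qed
  have "(\<integral>x. ?f x \<partial>lebesgue) = (\<integral>x. ?f x \<partial>distr (lborel \<Otimes>\<^sub>M lborel) borel e)"
    using f_meas distr_e by (simp add: integral_completion)
  also have "\<dots> = (\<integral>p. ?f (e p) \<partial>(lborel \<Otimes>\<^sub>M lborel))"
    using f_meas e_meas by (intro integral_distr) auto
  also have "\<dots> = (\<integral>y. (\<integral>t. ?f (e (y, t)) \<partial>lborel) \<partial>lborel)"
    using f_int by (rule lborel_pair.integral_fst'[symmetric])
  finally show ?thesis
    by (simp add: chord_integral)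
qed

lemma DERIV_along_line:
  fixes F :: "real^2 \<Rightarrow> real"
  assumes F: "\<And>x. (F has_derivative F' x) (at x)"
    and line: "\<And>t. e (y, t) = e (y, 0) + t *\<^sub>R a"
  shows "((\<lambda>t. F (e (y, t))) has_real_derivative F' (e (y, t)) a) (at t)"
proof -
  have "((\<lambda>t. e (y, t)) has_derivative (\<lambda>v. v *\<^sub>R a)) (at t)"
    by (subst line) (auto intro!: derivative_eq_intros)
  from has_derivative_compose[OF this F]
  have "((\<lambda>t. F (e (y, t))) has_derivative (\<lambda>v. F' (e (y, t)) (v *\<^sub>R a))) (at t)"
    by (simp add: o_def)
  moreover have "linear (F' (e (y, t)))"
    using F has_derivative_linear by blast
  ultimately show ?thesis
    unfolding has_field_derivative_def by (simp add: linear_scale mult.commute[of _ "F' (e (y, t)) a"])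
qed

lemma divergence_eq_derivative:
  fixes \<phi> :: "real^2 \<Rightarrow> real^2"
  assumes "\<And>x. (\<phi> has_derivative \<phi>' x) (at x)"
  shows "divergence \<phi> x = \<phi>' x (axis 1 1) $ 1 + \<phi>' x (axis 2 1) $ 2"
  unfolding divergence_def sum_2 frechet_derivative_at[OF assms, symmetric] ..

lemma has_derivative_vec_nth_comp:
  "(\<phi> has_derivative \<phi>') F \<Longrightarrow> ((\<lambda>x. \<phi> x $ k) has_derivative (\<lambda>v. \<phi>' v $ k)) F"
  by (rule bounded_linear.has_derivative[OF bounded_linear_vec_nth])

lemma continuous_on_blinfun_apply_nth:
  fixes D :: "real^2 \<Rightarrow> ((real^2) \<Rightarrow>\<^sub>L (real^2))"
  assumes "continuous_on UNIV D"
  shows "continuous_on UNIV (\<lambda>x. D x v $ k)"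
  by (intro continuous_on_component blinfun.continuous_on[OF assms continuous_on_const])

lemma C1c_fieldE:
  assumes "C1c_field \<phi>"
  obtains D where "\<And>x. (\<phi> has_derivative blinfun_apply (D x)) (at x)" "continuous_on UNIV D"
  using assms unfolding C1c_field_def by blast

lemma continuous_on_divergence:
  assumes "C1c_field \<phi>"
  shows "continuous_on UNIV (divergence \<phi>)"
proof -
  obtain D where D: "\<And>x. (\<phi> has_derivative blinfun_apply (D x)) (at x)" and "continuous_on UNIV D"
    using C1c_fieldE[OF assms] by blast
  then show ?thesis
    unfolding divergence_eq_derivative[OF D, abs_def]
    by (intro continuous_on_add continuous_on_blinfun_apply_nth)
qed

lemma has_derivative_DERIV_compose:
  fixes g :: "real^2 \<Rightarrow> real"
  assumes "DERIV f (g x) :> f'" "(g has_derivative g') (at x)"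
  shows "((\<lambda>x. f (g x)) has_derivative (\<lambda>v. f' * g' v)) (at x)"
  using has_derivative_compose[OF assms(2) assms(1)[unfolded has_field_derivative_def]] by (simp add: o_def)

lemma has_derivative_vec_nth: "((\<lambda>x::real^2. x$i) has_derivative (\<lambda>v. v$i)) (at x)"
  by (rule bounded_linear_imp_has_derivative[OF bounded_linear_vec_nth])

lemma continuous_on_DERIV: "(\<And>t. DERIV f t :> f' t) \<Longrightarrow> continuous_on UNIV f"
  by (meson DERIV_isCont continuous_at_imp_continuous_on)

lemma C1c_field_vec2:
  fixes F G Fx Fy Gx Gy :: "real^2 \<Rightarrow> real"
  defines "Z \<equiv> (\<lambda>x. (\<chi> i. if i = 1 then F x else G x) :: real^2)"
  assumes F: "\<And>x. (F has_derivative (\<lambda>v. Fx x * v$1 + Fy x * v$2)) (at x)"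
    and G: "\<And>x. (G has_derivative (\<lambda>v. Gx x * v$1 + Gy x * v$2)) (at x)"
    and cont: "continuous_on UNIV Fx" "continuous_on UNIV Fy" "continuous_on UNIV Gx" "continuous_on UNIV Gy"
    and support: "\<And>x. R \<le> \<bar>x$1\<bar> \<or> R \<le> \<bar>x$2\<bar> \<Longrightarrow> F x = 0 \<and> G x = 0"
  shows "C1c_field Z" and "divergence Z x = Fx x + Gy x"
proof -
  define L where "L x = (\<lambda>v::real^2. (\<chi> i. if i = 1 then Fx x * v$1 + Fy x * v$2
    else Gx x * v$1 + Gy x * v$2) :: real^2)" for x
  have "linear (L x)" for x
    by (rule linearI) (auto simp: L_def vec_eq_iff algebra_simps)
  then have L_linear: "bounded_linear (L x)" for x
    by (simp add: linear_conv_bounded_linear)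
  define D where "D x = Blinfun (L x)" for x
  have D_apply: "blinfun_apply (D x) = L x" for x
    unfolding D_def using L_linear by (simp add: bounded_linear_Blinfun_apply)
  have Z_deriv: "(Z has_derivative blinfun_apply (D x)) (at x)" for x
  proof -
    have "((\<lambda>x. Z x \<bullet> b) has_derivative (\<lambda>v. L x v \<bullet> b)) (at x)" if "b \<in> Basis" for b :: "real^2"
    proof -
      obtain i :: 2 where b: "b = axis i 1"
        using \<open>b \<in> Basis\<close> by (auto simp: Basis_vec_def)
      show ?thesis
        using exhaust_2_cases[of i] F[of x] G[of x] by (auto simp: b inner_axis L_def Z_def)
    qed
    then show ?thesis
      unfolding D_apply using has_derivative_componentwise_within[of _ "L x" x UNIV] L_linear by simp
  qed
  have D_cont: "continuous_on UNIV D"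
  proof (rule continuous_on_blinfun_componentwise)
    fix b :: "real^2"
    show "continuous_on UNIV (\<lambda>x. blinfun_apply (D x) b)"
      unfolding D_apply L_def
    proof (rule continuous_on_vec_lambda)
      show "continuous_on UNIV (\<lambda>x. if i = 1 then Fx x * b$1 + Fy x * b$2 else Gx x * b$1 + Gy x * b$2)" for i
        using cont by (cases "i = 1") (simp_all add: continuous_on_add continuous_on_mult_right)
    qed
  qed
  have "{x. Z x \<noteq> 0} \<subseteq> cbox (\<chi> i. -R) (\<chi> i. R)"
  proof
    fix x :: "real^2"
    assume "x \<in> {x. Z x \<noteq> 0}"
    moreover have "Z x = 0" if "R \<le> \<bar>x$1\<bar> \<or> R \<le> \<bar>x$2\<bar>"
      using support[OF that] by (simp add: vec_eq_iff Z_def)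
    ultimately have "\<bar>x$1\<bar> < R \<and> \<bar>x$2\<bar> < R"
      by force
    then have "\<forall>i. \<bar>x$i\<bar> \<le> R"
      using exhaust_2_cases by (metis less_eq_real_def)
    then show "x \<in> cbox (\<chi> i. -R) (\<chi> i. R)"
      unfolding mem_box_cart by (simp add: abs_le_iff) (meson minus_le_iff)
  qed
  then have "compact (closure {x. Z x \<noteq> 0})"
    by (meson bounded_cbox bounded_closure bounded_subset compact_closure)
  then show "C1c_field Z"
    unfolding C1c_field_def using Z_deriv D_cont by blast
  show "divergence Z x = Fx x + Gy x"
    by (simp add: divergence_eq_derivative[OF Z_deriv] D_apply L_def axis_def)
qed

section \<open>The clipped disc\<close>

definition unit_disc :: "(real^2) set" where
  "unit_disc = {x. norm x \<le> 1}"

definition clipped_disc :: "real \<Rightarrow> (real^2) set" where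
  "clipped_disc h = unit_disc \<inter> {x. \<forall>i. \<bar>x$i\<bar> \<le> h}"

definition chord_half :: "real \<Rightarrow> real \<Rightarrow> real" where
  "chord_half h y = min h (sqrt (1 - y\<^sup>2))"

lemma norm_vec2: "norm (x::real^2) = sqrt ((x$1)\<^sup>2 + (x$2)\<^sup>2)"
  by (simp add: norm_vec_def L2_set_def sum_2)

lemma mem_unit_disc_iff: "x \<in> unit_disc \<longleftrightarrow> (x$1)\<^sup>2 + (x$2)\<^sup>2 \<le> 1"
  by (simp add: unit_disc_def norm_vec2)

lemma abs_le_sqrt_iff: "0 \<le> a \<Longrightarrow> \<bar>t\<bar> \<le> sqrt a \<longleftrightarrow> t\<^sup>2 \<le> a"
  by (metis abs_ge_zero real_sqrt_abs real_sqrt_le_iff real_sqrt_pow2_iff)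

lemma mem_clipped_disc_iff:
  assumes h: "0 \<le> h" "h \<le> 1" and ij: "{i, j} = (UNIV :: 2 set)"
  shows "x \<in> clipped_disc h \<longleftrightarrow> \<bar>x$j\<bar> \<le> h \<and> \<bar>x$i\<bar> \<le> chord_half h (x$j)"
proof -
  have "i = 1 \<and> j = 2 \<or> i = 2 \<and> j = 1"
    using ij exhaust_2_cases[of i] exhaust_2_cases[of j] by (metis UNIV_2 doubleton_eq_iff)
  then have disc: "x \<in> unit_disc \<longleftrightarrow> (x$i)\<^sup>2 + (x$j)\<^sup>2 \<le> 1"
    and square: "(\<forall>k. \<bar>x$k\<bar> \<le> h) \<longleftrightarrow> \<bar>x$i\<bar> \<le> h \<and> \<bar>x$j\<bar> \<le> h"
    by (auto simp: mem_unit_disc_iff forall_2 add.commute)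
  show ?thesis
  proof
    assume "x \<in> clipped_disc h"
    then show "\<bar>x$j\<bar> \<le> h \<and> \<bar>x$i\<bar> \<le> chord_half h (x$j)"
      using disc square abs_le_sqrt_iff[of "1 - (x$j)\<^sup>2" "x$i"] zero_le_power2[of "x$i"]
      by (auto simp: clipped_disc_def chord_half_def)
  next
    assume *: "\<bar>x$j\<bar> \<le> h \<and> \<bar>x$i\<bar> \<le> chord_half h (x$j)"
    moreover have "0 \<le> 1 - (x$j)\<^sup>2"
      using * h abs_square_le_1[of "x$j"] by simp
    ultimately show "x \<in> clipped_disc h"
      using disc square by (auto simp: clipped_disc_def chord_half_def abs_le_sqrt_iff)
  qed
qed

lemma mem_clipped_disc_hline:
  "0 \<le> h \<Longrightarrow> h \<le> 1 \<Longrightarrow> hline (y, t) \<in> clipped_disc h \<longleftrightarrow> \<bar>y\<bar> \<le> h \<and> \<bar>t\<bar> \<le> chord_half h y"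
  using mem_clipped_disc_iff[of h 1 2 "hline (y, t)"] by (simp add: UNIV_2)

lemma mem_clipped_disc_vline:
  "0 \<le> h \<Longrightarrow> h \<le> 1 \<Longrightarrow> vline (y, t) \<in> clipped_disc h \<longleftrightarrow> \<bar>y\<bar> \<le> h \<and> \<bar>t\<bar> \<le> chord_half h y"
  using mem_clipped_disc_iff[of h 2 1 "vline (y, t)"] by (simp add: UNIV_2 insert_commute)

lemma chord_half_nonneg: "0 \<le> h \<Longrightarrow> h \<le> 1 \<Longrightarrow> \<bar>y\<bar> \<le> h \<Longrightarrow> 0 \<le> chord_half h y"
  using abs_square_le_1[of y] by (simp add: chord_half_def)

lemma compact_unit_disc: "compact unit_disc"
  using compact_cball[of "0::real^2" 1] by (simp add: unit_disc_def cball_def dist_norm)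

lemma compact_clipped_disc: "compact (clipped_disc h)"
proof -
  have "closed {x::real^2. \<forall>i. \<bar>x$i\<bar> \<le> h}"
    by (intro closed_Collect_all closed_Collect_le continuous_intros)
  then show ?thesis
    unfolding clipped_disc_def using compact_unit_disc by (rule compact_Int_closed[rotated])
qed

lemma clipped_disc_subset: "clipped_disc h \<subseteq> unit_disc"
  by (auto simp: clipped_disc_def)

lemma integral_clipped_disc_deriv1:
  fixes F g :: "real^2 \<Rightarrow> real"
  assumes h: "0 \<le> h" "h \<le> 1"
    and F: "\<And>x. (F has_derivative F' x) (at x)"
    and partial: "\<And>x. F' x (axis 1 1) = g x" and cont: "continuous_on UNIV g"
  shows "(\<integral>x. indicator (clipped_disc h) x * g x \<partial>lebesgue)
       = (\<integral>y. indicator {-h..h} y * (F (hline (y, chord_half h y)) - F (hline (y, - chord_half h y))) \<partial>lborel)"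
  by (rule integral_derivative_by_slices[OF distr_lborel_hline hline_measurable continuous_on_hline
        DERIV_along_line[OF F hline_eq, unfolded partial] cont compact_clipped_disc mem_clipped_disc_hline[OF h]
        chord_half_nonneg[OF h]])

lemma integral_clipped_disc_deriv2:
  fixes F g :: "real^2 \<Rightarrow> real"
  assumes h: "0 \<le> h" "h \<le> 1"
    and F: "\<And>x. (F has_derivative F' x) (at x)"
    and partial: "\<And>x. F' x (axis 2 1) = g x" and cont: "continuous_on UNIV g"
  shows "(\<integral>x. indicator (clipped_disc h) x * g x \<partial>lebesgue)
       = (\<integral>y. indicator {-h..h} y * (F (vline (y, chord_half h y)) - F (vline (y, - chord_half h y))) \<partial>lborel)"
  by (rule integral_derivative_by_slices[OF distr_lborel_vline vline_measurable continuous_on_vline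
        DERIV_along_line[OF F vline_eq, unfolded partial] cont compact_clipped_disc mem_clipped_disc_vline[OF h]
        chord_half_nonneg[OF h]])

section \<open>Upper bound for the total variation of the clipped disc\<close>

lemma neg_integral_Icc_diff_le:
  fixes F G :: "real \<Rightarrow> real"
  assumes "\<And>y. \<bar>F y\<bar> \<le> 1" "\<And>y. \<bar>G y\<bar> \<le> 1" "0 \<le> H"
  shows "- (\<integral>y. indicator {-H..H} y * (F y - G y) \<partial>lborel) \<le> 4 * H"
proof -
  have "- (\<integral>y. indicator {-H..H} y * (F y - G y) \<partial>lborel) = (\<integral>y. indicator {-H..H} y * (G y - F y) \<partial>lborel)"
    by (subst integral_minus[symmetric]) (simp add: algebra_simps)
  also have "\<dots> \<le> (\<integral>y. indicator {-H..H} y * 2 \<partial>lborel)"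
  proof (rule integral_mono')
    show "integrable lborel (\<lambda>y. indicator {-H..H} y * (2::real))"
      by (intro integrable_mult_left integrable_real_indicator) (auto simp: emeasure_lborel_Icc_eq)
    show "indicator {- H..H} y * (G y - F y) \<le> indicator {- H..H} y * 2" for y
      using assms(1,2)[of y] by (auto simp: indicator_def abs_le_iff)
  qed (auto simp: indicator_def)
  also have "\<dots> = 4 * H"
    using assms(3) by simp
  finally show ?thesis .
qed

text \<open>Each of \<open>\<partial>\<^sub>1\<phi>\<^sub>1\<close> and \<open>\<partial>\<^sub>2\<phi>\<^sub>2\<close> integrates over the clipped disc to the
  boundary values of \<open>\<phi>\<close> on the chords, which are bounded by \<open>1\<close>; the chords range over \<open>[-h, h]\<close>.\<close>

lemma pairing_clipped_disc_le:
  assumes h: "0 \<le> h" "h \<le> 1" and \<phi>: "C1c_field \<phi>" "\<And>x i. \<bar>\<phi> x $ i\<bar> \<le> 1"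
  shows "- (\<integral>x. indicator (clipped_disc h) x * divergence \<phi> x \<partial>lebesgue) \<le> 8 * h"
proof -
  obtain D where D: "\<And>x. (\<phi> has_derivative blinfun_apply (D x)) (at x)" and D_cont: "continuous_on UNIV D"
    using C1c_fieldE[OF \<phi>(1)] by blast
  let ?g1 = "\<lambda>x. D x (axis 1 1) $ 1" and ?g2 = "\<lambda>x. D x (axis 2 1) $ 2"
  have cont: "continuous_on UNIV ?g1" "continuous_on UNIV ?g2"
    using D_cont by (auto intro: continuous_on_blinfun_apply_nth)
  have "(\<integral>x. indicator (clipped_disc h) x * divergence \<phi> x \<partial>lebesgue)
      = (\<integral>x. indicator (clipped_disc h) x * ?g1 x + indicator (clipped_disc h) x * ?g2 x \<partial>lebesgue)"
    by (simp add: divergence_eq_derivative[OF D] algebra_simps)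
  also have "\<dots> = (\<integral>x. indicator (clipped_disc h) x * ?g1 x \<partial>lebesgue)
      + (\<integral>x. indicator (clipped_disc h) x * ?g2 x \<partial>lebesgue)"
    by (intro Bochner_Integration.integral_add integrable_indicator_times_continuous compact_clipped_disc cont)
  also note integral_clipped_disc_deriv1[OF h has_derivative_vec_nth_comp[OF D] refl cont(1)]
  also note integral_clipped_disc_deriv2[OF h has_derivative_vec_nth_comp[OF D] refl cont(2)]
  finally show ?thesis
    using neg_integral_Icc_diff_le[of "\<lambda>y. \<phi> (hline (y, chord_half h y)) $ 1" "\<lambda>y. \<phi> (hline (y, - chord_half h y)) $ 1" h]
      neg_integral_Icc_diff_le[of "\<lambda>y. \<phi> (vline (y, chord_half h y)) $ 2" "\<lambda>y. \<phi> (vline (y, - chord_half h y)) $ 2" h]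
      \<phi>(2) h by fastforce
qed

lemma TV1_indicator_clipped_disc_le:
  "0 \<le> h \<Longrightarrow> h \<le> 1 \<Longrightarrow> TV1 (indicator (clipped_disc h)) \<le> ereal (8 * h)"
  unfolding TV1_def by (rule SUP_least) (use pairing_clipped_disc_le in auto)

section \<open>One-dimensional \<open>C\<^sup>1\<close> profiles\<close>

lemma DERIV_of_quadratic_remainder:
  fixes f :: "real \<Rightarrow> real"
  assumes b: "\<And>h. \<bar>f (x+h) - f x - D*h\<bar> \<le> C*h\<^sup>2"
  shows "DERIV f x :> D"
proof -
  have "((\<lambda>h. (f (x+h) - f x)/h - D) \<longlongrightarrow> 0) (at 0)"
  proof (rule Lim_null_comparison)
    show "\<forall>\<^sub>F h in at 0. norm ((f (x+h) - f x)/h - D) \<le> C * \<bar>h\<bar>"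
      unfolding eventually_at_filter
    proof (rule always_eventually, intro allI impI)
      fix h :: real assume "h \<noteq> 0"
      then have "(f (x+h) - f x)/h - D = (f (x+h) - f x - D*h)/h" by (simp add: field_simps)
      then have "norm ((f (x+h) - f x)/h - D) = \<bar>f (x+h) - f x - D*h\<bar> / \<bar>h\<bar>" by (simp add: abs_divide)
      also have "\<dots> \<le> C*h\<^sup>2 / \<bar>h\<bar>" using b[of h] by (simp add: divide_right_mono)
      also have "\<dots> = C * \<bar>h\<bar>"
        using \<open>h \<noteq> 0\<close> by (cases "h > 0") (auto simp: field_simps power2_eq_square)
      finally show "norm ((f (x+h) - f x)/h - D) \<le> C * \<bar>h\<bar>" .
    qed
    show "((\<lambda>h. C * \<bar>h\<bar>) \<longlongrightarrow> 0) (at 0)"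
      by (rule tendsto_eq_intros, rule tendsto_const) (auto intro!: tendsto_eq_intros)
  qed
  then show ?thesis unfolding DERIV_def LIM_zero_iff .
qed

definition pos_sq :: "real \<Rightarrow> real" where
  "pos_sq u = (max 0 u)\<^sup>2"

definition pos_sq' :: "real \<Rightarrow> real" where
  "pos_sq' u = 2 * max 0 u"

lemma pos_sq_DERIV: "DERIV pos_sq u :> pos_sq' u"
proof (rule DERIV_of_quadratic_remainder[where C = 1])
  fix h :: real
  show "\<bar>pos_sq (u + h) - pos_sq u - pos_sq' u * h\<bar> \<le> 1 * h\<^sup>2"
  proof (cases "u \<le> 0"; cases "u + h \<le> 0")
    assume "u \<le> 0" "u + h \<le> 0"
    then show ?thesis
      by (simp add: pos_sq_def pos_sq'_def max_def)
  next
    assume a: "u \<le> 0" "\<not> u + h \<le> 0"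
    then have "(u + h)\<^sup>2 \<le> h\<^sup>2"
      by (intro power_mono) auto
    then show ?thesis
      using a by (simp add: pos_sq_def pos_sq'_def max_def)
  next
    assume a: "\<not> u \<le> 0" "u + h \<le> 0"
    then have eq: "pos_sq (u + h) - pos_sq u - pos_sq' u * h = - (u * u) - 2 * u * h"
      by (simp add: pos_sq_def pos_sq'_def max_def power2_eq_square)
    have "0 \<le> - u * (u + 2 * h)"
      using a by (intro mult_nonpos_nonpos) auto
    moreover have "0 \<le> (u + h) * (u + h)"
      by simp
    ultimately show ?thesis
      unfolding eq power2_eq_square by (smt (verit) distrib_left distrib_right mult.commute)
  next
    assume "\<not> u \<le> 0" "\<not> u + h \<le> 0"
    then have "pos_sq (u + h) - pos_sq u - pos_sq' u * h = h * h"
      by (simp add: pos_sq_def pos_sq'_def max_def power2_eq_square algebra_simps)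
    then show ?thesis
      by (simp add: power2_eq_square)
  qed
qed

lemma continuous_on_pos_sq': "continuous_on UNIV pos_sq'"
  unfolding pos_sq'_def by (intro continuous_intros)

lemma pos_sq_of_nonpos: "u \<le> 0 \<Longrightarrow> pos_sq u = 0"
  by (simp add: pos_sq_def)

lemma pos_sq_of_nonneg: "0 \<le> u \<Longrightarrow> pos_sq u = u\<^sup>2"
  by (simp add: pos_sq_def)

lemma pos_sq'_of_nonpos: "u \<le> 0 \<Longrightarrow> pos_sq' u = 0"
  by (simp add: pos_sq'_def)

lemma pos_sq'_of_nonneg: "0 \<le> u \<Longrightarrow> pos_sq' u = 2*u"
  by (simp add: pos_sq'_def)

definition smooth_step :: "real \<Rightarrow> real" where
  "smooth_step u = 2 * pos_sq u - 4 * pos_sq (u - 1/2) + 2 * pos_sq (u - 1)"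

definition smooth_step' :: "real \<Rightarrow> real" where
  "smooth_step' u = 2 * pos_sq' u - 4 * pos_sq' (u - 1/2) + 2 * pos_sq' (u - 1)"

lemma smooth_step_DERIV: "DERIV smooth_step u :> smooth_step' u"
  unfolding smooth_step_def smooth_step'_def
  by (auto intro!: derivative_eq_intros DERIV_chain2[OF pos_sq_DERIV])

lemma continuous_on_smooth_step': "continuous_on UNIV smooth_step'"
  unfolding smooth_step'_def
  by (intro continuous_intros continuous_on_compose2[OF continuous_on_pos_sq']) auto

lemma smooth_step_cases:
  "u \<le> 0 \<Longrightarrow> smooth_step u = 0 \<and> smooth_step' u = 0"
  "0 \<le> u \<Longrightarrow> u \<le> 1/2 \<Longrightarrow> smooth_step u = 2*u\<^sup>2 \<and> smooth_step' u = 4*u"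
  "1/2 \<le> u \<Longrightarrow> u \<le> 1 \<Longrightarrow> smooth_step u = 1 - 2*(1-u)\<^sup>2 \<and> smooth_step' u = 4 - 4*u"
  "1 \<le> u \<Longrightarrow> smooth_step u = 1 \<and> smooth_step' u = 0"
  by (auto simp: smooth_step_def smooth_step'_def pos_sq_of_nonpos pos_sq_of_nonneg pos_sq'_of_nonpos pos_sq'_of_nonneg power2_eq_square algebra_simps)

lemma smooth_step_bounds: "0 \<le> smooth_step u" "smooth_step u \<le> 1" "0 \<le> smooth_step' u" "smooth_step' u \<le> 2"
proof -
  have "(0 \<le> smooth_step u \<and> smooth_step u \<le> 1) \<and> (0 \<le> smooth_step' u \<and> smooth_step' u \<le> 2)"
  proof (cases "u \<le> 0")
    case True then show ?thesis using smooth_step_cases(1) by simp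
  next
    case F1: False
    show ?thesis
    proof (cases "u \<le> 1/2")
      case True
      have "u\<^sup>2 \<le> (1/2)\<^sup>2" using F1 True by (intro power_mono) auto
      then show ?thesis using smooth_step_cases(2)[of u] F1 True by (simp add: power2_eq_square)
    next
      case F2: False
      show ?thesis
      proof (cases "u \<le> 1")
        case True
        have "(1-u)\<^sup>2 \<le> (1/2)\<^sup>2" using F2 True by (intro power_mono) auto
        then show ?thesis using smooth_step_cases(3)[of u] F2 True by (simp add: power2_eq_square)
      next
        case False then show ?thesis using smooth_step_cases(4)[of u] by simp
      qed
    qed
  qed
  then show "0 \<le> smooth_step u" "smooth_step u \<le> 1" "0 \<le> smooth_step' u" "smooth_step' u \<le> 2" by auto
qed

text \<open>A \<open>C\<^sup>1\<close> version of the clamp \<open>t \<mapsto> max (-1) (min 1 t)\<close>, its corners rounded off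
  over \<open>[1 - d, 1 + d]\<close>.\<close>

definition soft_clip :: "real \<Rightarrow> real \<Rightarrow> real" where
  "soft_clip d t = t - (pos_sq (t-1+d) - pos_sq (t-1-d))/(4*d) + (pos_sq (-t-1+d) - pos_sq (-t-1-d))/(4*d)"

definition soft_clip' :: "real \<Rightarrow> real \<Rightarrow> real" where
  "soft_clip' d t = 1 - (pos_sq' (t-1+d) - pos_sq' (t-1-d))/(4*d) - (pos_sq' (-t-1+d) - pos_sq' (-t-1-d))/(4*d)"

lemma soft_clip_DERIV: assumes "d \<noteq> 0" shows "DERIV (soft_clip d) t :> soft_clip' d t"
  unfolding soft_clip_def soft_clip'_def using assms
  by (auto intro!: derivative_eq_intros DERIV_chain2[OF pos_sq_DERIV] simp: field_simps)

lemma continuous_on_soft_clip': "d \<noteq> 0 \<Longrightarrow> continuous_on UNIV (soft_clip' d)"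
  unfolding soft_clip'_def
  by (intro continuous_intros continuous_on_compose2[OF continuous_on_pos_sq']) auto

lemma soft_clip_odd: "soft_clip d (-t) = - soft_clip d t" "soft_clip' d (-t) = soft_clip' d t"
  by (simp_all add: soft_clip_def soft_clip'_def algebra_simps)

lemma soft_clip_nonneg_cases:
  assumes d: "0 < d" "d \<le> 1/2" and t: "0 \<le> t"
  shows "t \<le> 1-d \<Longrightarrow> soft_clip d t = t \<and> soft_clip' d t = 1"
    and "1-d \<le> t \<Longrightarrow> t \<le> 1+d \<Longrightarrow> soft_clip d t = t - (t-1+d)\<^sup>2/(4*d) \<and> soft_clip' d t = 1 - (t-1+d)/(2*d)"
    and "1+d \<le> t \<Longrightarrow> soft_clip d t = 1 \<and> soft_clip' d t = 0"
proof -
  have n: "pos_sq (-t-1+d) = 0" "pos_sq (-t-1-d) = 0" "pos_sq' (-t-1+d) = 0" "pos_sq' (-t-1-d) = 0"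
    using d t by (auto intro!: pos_sq_of_nonpos pos_sq'_of_nonpos)
  show "t \<le> 1-d \<Longrightarrow> soft_clip d t = t \<and> soft_clip' d t = 1"
    using d by (simp add: soft_clip_def soft_clip'_def n pos_sq_of_nonpos pos_sq'_of_nonpos)
  have h2: "(2 * t - 2 + 2 * d) / (4 * d) = (t - 1 + d) / (2 * d)" using d by (simp add: field_simps)
  show "1-d \<le> t \<Longrightarrow> t \<le> 1+d \<Longrightarrow> soft_clip d t = t - (t-1+d)\<^sup>2/(4*d) \<and> soft_clip' d t = 1 - (t-1+d)/(2*d)"
    using d by (simp add: soft_clip_def soft_clip'_def n pos_sq_of_nonpos pos_sq'_of_nonpos pos_sq_of_nonneg pos_sq'_of_nonneg h2)
  assume a3: "1+d \<le> t"
  have e1: "(t-1+d)\<^sup>2 - (t-1-d)\<^sup>2 = 4*d*(t-1)" by (simp add: power2_eq_square algebra_simps)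
  have e2: "2*(t-1+d) - 2*(t-1-d) = 4*d" by simp
  have "soft_clip d t = t - ((t-1+d)\<^sup>2 - (t-1-d)\<^sup>2)/(4*d)"
    using d a3 by (simp add: soft_clip_def n pos_sq_of_nonneg)
  also have "\<dots> = 1" using d by (simp only: e1) simp
  finally have c1: "soft_clip d t = 1" .
  have "soft_clip' d t = 1 - (2*(t-1+d) - 2*(t-1-d))/(4*d)"
    using d a3 by (simp add: soft_clip'_def n pos_sq'_of_nonneg)
  also have "\<dots> = 0" using d by (simp only: e2) simp
  finally show "soft_clip d t = 1 \<and> soft_clip' d t = 0" using c1 by simp
qed

lemma soft_clip_nonneg_bounds:
  assumes d: "0 < d" "d \<le> 1/2" and t: "0 \<le> t"
  shows "0 \<le> soft_clip d t \<and> soft_clip d t \<le> 1 \<and> 0 \<le> soft_clip' d t \<and> soft_clip' d t \<le> 1"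
proof (cases "t \<le> 1-d")
  case True then show ?thesis using soft_clip_nonneg_cases(1)[OF d t] d t by simp
next
  case F1: False
  show ?thesis
  proof (cases "t \<le> 1+d")
    case True
    let ?u = "t-1+d"
    have u: "0 \<le> ?u" "?u \<le> 2*d" using F1 True by auto
    have "?u\<^sup>2 \<le> ?u * (2*d)" using u by (simp add: power2_eq_square mult_left_mono)
    then have b1: "?u\<^sup>2/(4*d) \<le> ?u/2" using d by (simp add: field_simps)
    have "?u\<^sup>2 - 4*d*(t-1) = (?u - 2*d)\<^sup>2" by (simp add: power2_eq_square algebra_simps)
    then have "4*d*(t-1) \<le> ?u\<^sup>2" by (smt (verit) zero_le_power2)
    then have "t - 1 \<le> ?u\<^sup>2/(4*d)" using d by (simp add: le_divide_eq mult.commute)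
    then have b2: "t - ?u\<^sup>2/(4*d) \<le> 1" by simp
    have b3: "?u/(2*d) \<le> 1" using u d by simp
    show ?thesis using soft_clip_nonneg_cases(2)[OF d t] F1 True b1 b2 b3 u d by auto
  next
    case False then show ?thesis using soft_clip_nonneg_cases(3)[OF d t] by simp
  qed
qed

lemma soft_clip_bounds:
  assumes d: "0 < d" "d \<le> 1/2"
  shows "\<bar>soft_clip d t\<bar> \<le> 1" "0 \<le> soft_clip' d t" "soft_clip' d t \<le> 1"
    "0 \<le> t \<Longrightarrow> 0 \<le> soft_clip d t" "t \<le> 0 \<Longrightarrow> soft_clip d t \<le> 0"
    "\<bar>t\<bar> \<le> 1 - d \<Longrightarrow> soft_clip' d t = 1" "1 + d \<le> \<bar>t\<bar> \<Longrightarrow> soft_clip' d t = 0"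
    "1 + d \<le> t \<Longrightarrow> soft_clip d t = 1"
proof -
  have A: "0 \<le> soft_clip d \<bar>t\<bar> \<and> soft_clip d \<bar>t\<bar> \<le> 1 \<and> 0 \<le> soft_clip' d \<bar>t\<bar> \<and> soft_clip' d \<bar>t\<bar> \<le> 1"
    using soft_clip_nonneg_bounds[OF d, of "\<bar>t\<bar>"] by simp
  have e1: "soft_clip' d \<bar>t\<bar> = soft_clip' d t"
  proof (cases "0 \<le> t")
    case True then show ?thesis by simp
  next
    case False then have "\<bar>t\<bar> = -t" by simp
    then show ?thesis by (simp only: soft_clip_odd(2))
  qed
  have e2: "0 \<le> t \<Longrightarrow> soft_clip d \<bar>t\<bar> = soft_clip d t" by simp
  have e3: "t \<le> 0 \<Longrightarrow> soft_clip d \<bar>t\<bar> = - soft_clip d t"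
  proof -
    assume "t \<le> 0" then have "\<bar>t\<bar> = -t" by simp
    then show ?thesis by (simp only: soft_clip_odd(1))
  qed
  show "0 \<le> soft_clip' d t" "soft_clip' d t \<le> 1" using A e1 by auto
  show "0 \<le> t \<Longrightarrow> 0 \<le> soft_clip d t" using A e2 by auto
  show "t \<le> 0 \<Longrightarrow> soft_clip d t \<le> 0" using A e3 by fastforce
  show "\<bar>soft_clip d t\<bar> \<le> 1"
  proof (cases "0 \<le> t")
    case True then show ?thesis using A e2 by auto
  next
    case False then show ?thesis using A e3 by fastforce
  qed
  show "\<bar>t\<bar> \<le> 1 - d \<Longrightarrow> soft_clip' d t = 1" using soft_clip_nonneg_cases(1)[OF d, of "\<bar>t\<bar>"] e1 by simp
  show "1 + d \<le> \<bar>t\<bar> \<Longrightarrow> soft_clip' d t = 0" using soft_clip_nonneg_cases(3)[OF d, of "\<bar>t\<bar>"] e1 d by simp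
  show "1 + d \<le> t \<Longrightarrow> soft_clip d t = 1" using soft_clip_nonneg_cases(3)[OF d, of t] d by simp
qed

definition cutoff :: "real \<Rightarrow> real" where
  "cutoff t = 1 - smooth_step ((t-2)/2) - smooth_step ((-t-2)/2)"

definition cutoff' :: "real \<Rightarrow> real" where
  "cutoff' t = - smooth_step' ((t-2)/2)/2 + smooth_step' ((-t-2)/2)/2"

lemma cutoff_DERIV: "DERIV cutoff t :> cutoff' t"
  unfolding cutoff_def cutoff'_def
  by (auto intro!: derivative_eq_intros DERIV_chain2[OF smooth_step_DERIV] simp: field_simps)

lemma continuous_on_cutoff': "continuous_on UNIV cutoff'"
  unfolding cutoff'_def
  by (intro continuous_intros continuous_on_compose2[OF continuous_on_smooth_step']) auto

lemma cutoff_props: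
  "0 \<le> cutoff t" "cutoff t \<le> 1" "\<bar>cutoff' t\<bar> \<le> 1" "0 \<le> t \<Longrightarrow> cutoff' t \<le> 0" "t \<le> 0 \<Longrightarrow> 0 \<le> cutoff' t"
  "\<bar>t\<bar> \<le> 2 \<Longrightarrow> cutoff t = 1 \<and> cutoff' t = 0" "4 \<le> \<bar>t\<bar> \<Longrightarrow> cutoff t = 0"
proof -
  have z: "0 \<le> t \<Longrightarrow> smooth_step ((-t-2)/2) = 0 \<and> smooth_step' ((-t-2)/2) = 0" "t \<le> 0 \<Longrightarrow> smooth_step ((t-2)/2) = 0 \<and> smooth_step' ((t-2)/2) = 0"
    by (auto intro!: smooth_step_cases(1))
  have b: "0 \<le> smooth_step u" "smooth_step u \<le> 1" "0 \<le> smooth_step' u" "smooth_step' u \<le> 2" for u using smooth_step_bounds by auto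
  show "0 \<le> cutoff t" "cutoff t \<le> 1" "\<bar>cutoff' t\<bar> \<le> 1" "0 \<le> t \<Longrightarrow> cutoff' t \<le> 0" "t \<le> 0 \<Longrightarrow> 0 \<le> cutoff' t"
    using z b[of "(t-2)/2"] b[of "(-t-2)/2"] unfolding cutoff_def cutoff'_def by (cases "0 \<le> t"; fastforce)+
  show "\<bar>t\<bar> \<le> 2 \<Longrightarrow> cutoff t = 1 \<and> cutoff' t = 0"
    using smooth_step_cases(1)[of "(t-2)/2"] smooth_step_cases(1)[of "(-t-2)/2"] unfolding cutoff_def cutoff'_def by auto
  show "4 \<le> \<bar>t\<bar> \<Longrightarrow> cutoff t = 0"
    using z smooth_step_cases(4)[of "(t-2)/2"] smooth_step_cases(4)[of "(-t-2)/2"] unfolding cutoff_def by (cases "0 \<le> t") auto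
qed

definition plateau :: "real \<Rightarrow> real \<Rightarrow> real \<Rightarrow> real \<Rightarrow> real" where
  "plateau c t1 k t = 2* c - c * (smooth_step ((t - t1)/k) + smooth_step ((-t - t1)/k))"

definition plateau' :: "real \<Rightarrow> real \<Rightarrow> real \<Rightarrow> real \<Rightarrow> real" where
  "plateau' c t1 k t = - c * (smooth_step' ((t - t1)/k)/k - smooth_step' ((-t - t1)/k)/k)"

lemma plateau_DERIV: assumes "k \<noteq> 0" shows "DERIV (plateau c t1 k) t :> plateau' c t1 k t"
  unfolding plateau_def plateau'_def using assms
  by (auto intro!: derivative_eq_intros DERIV_chain2[OF smooth_step_DERIV] simp: field_simps)

lemma continuous_on_plateau': "k \<noteq> 0 \<Longrightarrow> continuous_on UNIV (plateau' c t1 k)"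
  unfolding plateau'_def
  by (intro continuous_intros continuous_on_compose2[OF continuous_on_smooth_step']) auto

lemma plateau_props:
  assumes "0 < c" "0 < t1" "0 < k"
  shows "c \<le> plateau c t1 k t" "plateau c t1 k t \<le> 2* c" "\<bar>t\<bar> \<le> t1 \<Longrightarrow> plateau c t1 k t = 2* c"
    "t1 + k \<le> \<bar>t\<bar> \<Longrightarrow> plateau c t1 k t = c"
proof -
  have b: "0 \<le> smooth_step u" "smooth_step u \<le> 1" for u using smooth_step_bounds by auto
  have z: "0 \<le> t \<Longrightarrow> smooth_step ((-t - t1)/k) = 0" "t \<le> 0 \<Longrightarrow> smooth_step ((t - t1)/k) = 0"
    using assms by (auto intro!: smooth_step_cases(1)[THEN conjunct1] simp: divide_nonpos_pos)
  have "c * (smooth_step ((t - t1)/k) + smooth_step ((-t - t1)/k)) \<le> c * 1"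
    using z b[of "(t - t1)/k"] b[of "(-t - t1)/k"] assms by (cases "0 \<le> t") (auto intro!: mult_left_mono)
  moreover have "0 \<le> c * (smooth_step ((t - t1)/k) + smooth_step ((-t - t1)/k))"
    using b assms by simp
  ultimately show "c \<le> plateau c t1 k t" "plateau c t1 k t \<le> 2* c" unfolding plateau_def by auto
  show "\<bar>t\<bar> \<le> t1 \<Longrightarrow> plateau c t1 k t = 2* c"
    using assms smooth_step_cases(1)[of "(t - t1)/k"] smooth_step_cases(1)[of "(-t - t1)/k"] 
    by (auto simp: plateau_def divide_nonpos_pos)
  show "t1 + k \<le> \<bar>t\<bar> \<Longrightarrow> plateau c t1 k t = c"
    using assms z smooth_step_cases(4)[of "(t - t1)/k"] smooth_step_cases(4)[of "(-t - t1)/k"]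
    by (cases "0 \<le> t") (auto simp: plateau_def field_simps)
qed

section \<open>The calibration inequality\<close>

lemma pairing_le_energy:
  fixes v f :: "real^2 \<Rightarrow> real"
  assumes \<phi>: "C1c_field \<phi>" "\<And>x i. \<bar>\<phi> x $ i\<bar> \<le> 1"
    and div_bound: "\<And>x. \<bar>divergence \<phi> x\<bar> \<le> lam"
    and v: "integrable lebesgue v" and f: "integrable lebesgue f"
    and f_div: "integrable lebesgue (\<lambda>x. f x * divergence \<phi> x)"
  shows "ereal (- (\<integral>x. f x * divergence \<phi> x \<partial>lebesgue)) \<le> energy v f lam"
proof -
  let ?g = "divergence \<phi>"
  have "?g \<in> borel_measurable lborel"
    using continuous_on_divergence[OF \<phi>(1)] by (simp add: borel_measurable_continuous_onI)
  then have g_meas: "?g \<in> borel_measurable lebesgue"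
    by (rule measurable_completion)
  have v_div: "integrable lebesgue (\<lambda>x. v x * ?g x)"
  proof (rule Bochner_Integration.integrable_bound)
    show "integrable lebesgue (\<lambda>x. lam * v x)"
      using v by simp
    show "(\<lambda>x. v x * ?g x) \<in> borel_measurable lebesgue"
      using v g_meas by measurable
    show "AE x in lebesgue. norm (v x * ?g x) \<le> norm (lam * v x)"
    proof (rule AE_I2)
      fix x
      have "\<bar>v x\<bar> * \<bar>?g x\<bar> \<le> \<bar>v x\<bar> * lam"
        using div_bound[of x] by (intro mult_left_mono) auto
      moreover have "0 \<le> lam"
        using div_bound[of x] by linarith
      ultimately show "norm (v x * ?g x) \<le> norm (lam * v x)"
        by (simp add: abs_mult mult.commute)
    qed
  qed
  have diff: "integrable lebesgue (\<lambda>x. \<bar>v x - f x\<bar>)"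
    using v f by auto
  have pointwise: "- (f x * ?g x) \<le> - (v x * ?g x) + lam * \<bar>v x - f x\<bar>" for x
  proof -
    have "?g x * (v x - f x) \<le> \<bar>?g x\<bar> * \<bar>v x - f x\<bar>"
      by (metis abs_ge_self abs_mult)
    also have "\<dots> \<le> lam * \<bar>v x - f x\<bar>"
      using div_bound[of x] by (intro mult_right_mono) auto
    finally show ?thesis
      by (simp add: algebra_simps)
  qed
  have "- (\<integral>x. f x * ?g x \<partial>lebesgue) = (\<integral>x. - (f x * ?g x) \<partial>lebesgue)"
    by simp
  also have "\<dots> \<le> (\<integral>x. - (v x * ?g x) + lam * \<bar>v x - f x\<bar> \<partial>lebesgue)"
  proof (rule integral_mono)
    show "integrable lebesgue (\<lambda>x. - (f x * ?g x))"
      using f_div by simp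
    show "integrable lebesgue (\<lambda>x. - (v x * ?g x) + lam * \<bar>v x - f x\<bar>)"
      using v_div diff by simp
  qed (rule pointwise)
  also have "\<dots> = - (\<integral>x. v x * ?g x \<partial>lebesgue) + lam * (\<integral>x. \<bar>v x - f x\<bar> \<partial>lebesgue)"
    using v_div diff by simp
  finally have "ereal (- (\<integral>x. f x * ?g x \<partial>lebesgue))
      \<le> ereal (- (\<integral>x. v x * ?g x \<partial>lebesgue)) + ereal (lam * (\<integral>x. \<bar>v x - f x\<bar> \<partial>lebesgue))"
    by simp
  also have "ereal (- (\<integral>x. v x * ?g x \<partial>lebesgue)) \<le> TV1 v"
    unfolding TV1_def using \<phi> by (intro SUP_upper) auto
  finally show ?thesis
    unfolding energy_def by (simp add: add_right_mono)
qed

section \<open>The calibrating field\<close>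

text \<open>Near the disc its \<open>i\<close>-th component is \<open>-clamp (x\<^sub>i / A (x\<^sub>j))\<close>, where the width \<open>A\<close> is \<open>2s\<close> in
  the core strip \<open>|x\<^sub>j| \<le> 2s(1+d)\<close> and \<open>s\<close> for \<open>|x\<^sub>j| \<ge> 1/\<surd>2\<close>; the cutoff makes it compactly
  supported.\<close>

locale calibration =
  fixes s d :: real
  assumes s_pos: "0 < s" and d_pos: "0 < d" and d_le: "d \<le> 1/2"
    and s_small: "8 * s\<^sup>2 * (1 + d)\<^sup>2 < 1"
begin

definition core :: real where
  "core = 2 * s * (1 + d)"

definition scale :: "real \<Rightarrow> real" where
  "scale = plateau s core (sqrt (1/2) - core)"

definition scale' :: "real \<Rightarrow> real" where
  "scale' = plateau' s core (sqrt (1/2) - core)"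

definition comp :: "2 \<Rightarrow> 2 \<Rightarrow> real^2 \<Rightarrow> real" where
  "comp i j x = - soft_clip d (x$i / scale (x$j)) * cutoff (x$i) * cutoff (x$j)"

definition comp_di :: "2 \<Rightarrow> 2 \<Rightarrow> real^2 \<Rightarrow> real" where
  "comp_di i j x = - (soft_clip' d (x$i / scale (x$j)) / scale (x$j) * cutoff (x$i)
     + soft_clip d (x$i / scale (x$j)) * cutoff' (x$i)) * cutoff (x$j)"

definition comp_dj :: "2 \<Rightarrow> 2 \<Rightarrow> real^2 \<Rightarrow> real" where
  "comp_dj i j x = - (soft_clip' d (x$i / scale (x$j)) * (- x$i * scale' (x$j) / (scale (x$j))\<^sup>2) * cutoff (x$j)
     + soft_clip d (x$i / scale (x$j)) * cutoff' (x$j)) * cutoff (x$i)"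

definition calib :: "real^2 \<Rightarrow> real^2" where
  "calib = (\<lambda>x. \<chi> k. if k = 1 then comp 1 2 x else comp 2 1 x)"

lemma s_le_half: "s \<le> 1/2"
proof -
  have "1 \<le> (1 + d)\<^sup>2"
    using d_pos by (intro one_le_power) simp
  then have "8 * s\<^sup>2 * 1 \<le> 8 * s\<^sup>2 * (1 + d)\<^sup>2"
    by (intro mult_left_mono) auto
  then have "s\<^sup>2 < (1/2)\<^sup>2"
    using s_small by (simp add: power2_eq_square)
  then show ?thesis
    using s_pos by (meson less_imp_le power_less_imp_less_base zero_le_divide_1_iff zero_le_numeral)
qed

lemma core_pos: "0 < core"
  using s_pos d_pos by (simp add: core_def)

lemma core_less: "core < sqrt (1/2)"
proof -
  have "core\<^sup>2 = 4 * s\<^sup>2 * (1 + d)\<^sup>2"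
    by (simp add: core_def power2_eq_square)
  also have "\<dots> < 1/2"
    using s_small by simp
  finally show ?thesis
    using core_pos by (simp add: real_less_rsqrt)
qed

lemma scale_props:
  "s \<le> scale t" "scale t \<le> 2 * s" "\<bar>t\<bar> \<le> core \<Longrightarrow> scale t = 2 * s"
  "sqrt (1/2) \<le> \<bar>t\<bar> \<Longrightarrow> scale t = s"
  using plateau_props[OF s_pos core_pos, of "sqrt (1/2) - core" t] core_less by (auto simp: scale_def)

lemma scale_pos: "0 < scale t"
  using scale_props(1)[of t] s_pos by simp

lemma scale_DERIV: "DERIV scale t :> scale' t"
  unfolding scale_def scale'_def using core_less by (intro plateau_DERIV) simp

lemma continuous_on_scale': "continuous_on UNIV scale'"
  unfolding scale'_def using core_less by (intro continuous_on_plateau') simp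

lemma comp_has_derivative:
  "(comp i j has_derivative (\<lambda>v. comp_di i j x * v$i + comp_dj i j x * v$j)) (at x)"
proof -
  have A: "scale (x$j) \<noteq> 0"
    using scale_pos[of "x$j"] by simp
  have "((\<lambda>x. x$i / scale (x$j)) has_derivative
      (\<lambda>h. (h$i * scale (x$j) - x$i * (scale' (x$j) * h$j)) / (scale (x$j) * scale (x$j)))) (at x)"
    by (rule has_derivative_divide'[OF has_derivative_vec_nth
          has_derivative_DERIV_compose[OF scale_DERIV has_derivative_vec_nth] A])
  note clip = has_derivative_DERIV_compose[OF soft_clip_DERIV this]
  note cutoff = has_derivative_DERIV_compose[OF cutoff_DERIV has_derivative_vec_nth]
  have "d \<noteq> 0"
    using d_pos by simp
  note product = has_derivative_mult[OF has_derivative_mult[OF has_derivative_minus[OF clip[OF this]]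
        cutoff[of i]] cutoff[of j]]
  show ?thesis
    unfolding comp_def[abs_def]
    by (rule has_derivative_eq_rhs[OF product])
      (use A in \<open>auto simp: fun_eq_iff comp_di_def comp_dj_def field_simps power2_eq_square\<close>)
qed

lemma continuous_on_comp_di: "continuous_on UNIV (comp_di i j)"
  and continuous_on_comp_dj: "continuous_on UNIV (comp_dj i j)"
proof -
  have nth: "continuous_on UNIV (\<lambda>x::real^2. x$k)" for k
    by (intro continuous_on_component continuous_on_id)
  have "continuous_on UNIV (\<lambda>x. f (x$k))" if "continuous_on UNIV f" for f :: "real \<Rightarrow> real" and k :: 2
    by (rule continuous_on_compose2[OF that nth[of k]]) auto
  note comp_nth = this[OF continuous_on_DERIV[OF scale_DERIV]] this[OF continuous_on_scale']
    this[OF continuous_on_DERIV[OF cutoff_DERIV]] this[OF continuous_on_cutoff']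
  have "continuous_on UNIV (\<lambda>x::real^2. x$i / scale (x$j))"
    using scale_pos by (intro continuous_on_divide nth comp_nth) (auto simp: less_imp_neq[symmetric])
  note quotient = continuous_on_compose2[OF _ this, simplified]
  have clip: "continuous_on UNIV (soft_clip d)" "continuous_on UNIV (soft_clip' d)"
    using d_pos by (auto intro: continuous_on_DERIV[OF soft_clip_DERIV] continuous_on_soft_clip')
  show "continuous_on UNIV (comp_di i j)" "continuous_on UNIV (comp_dj i j)"
    unfolding comp_di_def[abs_def] comp_dj_def[abs_def] using scale_pos
    by (intro continuous_intros comp_nth quotient[OF clip(1)] quotient[OF clip(2)] nth;
        auto simp: less_imp_neq[symmetric])+
qed

lemma C1c_field_calib: "C1c_field calib"
  and divergence_calib: "divergence calib x = comp_di 1 2 x + comp_di 2 1 x"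
proof -
  have "(comp 2 1 has_derivative (\<lambda>v. comp_dj 2 1 x * v$1 + comp_di 2 1 x * v$2)) (at x)" for x
    by (rule has_derivative_eq_rhs[OF comp_has_derivative]) (auto simp: fun_eq_iff)
  moreover have "comp 1 2 x = 0 \<and> comp 2 1 x = 0" if "4 \<le> \<bar>x$1\<bar> \<or> 4 \<le> \<bar>x$2\<bar>" for x
    using that cutoff_props(7) by (auto simp: comp_def)
  ultimately show "C1c_field calib" "divergence calib x = comp_di 1 2 x + comp_di 2 1 x"
    unfolding calib_def
    using C1c_field_vec2[where F = "comp 1 2" and G = "comp 2 1" and Fx = "comp_di 1 2" and Fy = "comp_dj 1 2"
        and Gx = "comp_dj 2 1" and Gy = "comp_di 2 1" and R = 4]
      comp_has_derivative continuous_on_comp_di continuous_on_comp_dj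
    by auto
qed

lemma abs_calib_le: "\<bar>calib x $ k\<bar> \<le> 1"
proof -
  have "\<bar>comp i j x\<bar> \<le> 1 * 1 * 1" for i j
    unfolding comp_def abs_mult abs_minus_cancel
    using soft_clip_bounds(1)[OF d_pos d_le] cutoff_props(1,2) by (intro mult_mono) auto
  then show ?thesis
    by (simp add: calib_def)
qed

lemma comp_di_split:
  "\<exists>a p. comp_di i j x = - a - p \<and> 0 \<le> a \<and> a \<le> soft_clip' d (x$i / scale (x$j)) / scale (x$j)
    \<and> -1 \<le> p \<and> p \<le> 0
    \<and> (\<bar>x$1\<bar> \<le> 2 \<and> \<bar>x$2\<bar> \<le> 2 \<longrightarrow> a = soft_clip' d (x$i / scale (x$j)) / scale (x$j) \<and> p = 0)"
proof -
  let ?A = "scale (x$j)" and ?u = "x$i / scale (x$j)"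
  define a where "a = soft_clip' d ?u / ?A * cutoff (x$i) * cutoff (x$j)"
  define p where "p = soft_clip d ?u * cutoff' (x$i) * cutoff (x$j)"
  have A: "0 < ?A"
    by (rule scale_pos)
  have clip': "0 \<le> soft_clip' d ?u" "soft_clip' d ?u \<le> 1"
    using soft_clip_bounds[OF d_pos d_le] by auto
  have cut: "0 \<le> cutoff t" "cutoff t \<le> 1" for t
    using cutoff_props by auto
  have split: "comp_di i j x = - a - p"
    by (simp add: comp_di_def a_def p_def algebra_simps)
  have a_ge: "0 \<le> a"
    using clip' A cut by (simp add: a_def)
  have "a \<le> (soft_clip' d ?u / ?A) * 1"
    unfolding a_def mult.assoc using clip' A cut by (intro mult_left_mono mult_le_one) auto
  then have a_le: "a \<le> soft_clip' d ?u / ?A"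
    by simp
  have "\<bar>p\<bar> \<le> 1 * 1 * 1"
    unfolding p_def abs_mult
    using soft_clip_bounds(1)[OF d_pos d_le] cutoff_props(3) cut by (intro mult_mono) auto
  then have p_ge: "-1 \<le> p"
    by simp
  have p_le: "p \<le> 0"
  proof (cases "0 \<le> x$i")
    case True
    then have "0 \<le> soft_clip d ?u" "cutoff' (x$i) \<le> 0"
      using A soft_clip_bounds(4)[OF d_pos d_le] cutoff_props(4) by auto
    then show ?thesis
      using cut[of "x$j"] by (simp add: p_def mult_nonneg_nonpos mult_nonpos_nonneg)
  next
    case False
    then have "soft_clip d ?u \<le> 0" "0 \<le> cutoff' (x$i)"
      using A soft_clip_bounds(5)[OF d_pos d_le] cutoff_props(5) by (auto simp: divide_nonpos_pos)
    then show ?thesis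
      using cut[of "x$j"] by (simp add: p_def mult_nonpos_nonneg)
  qed
  have inner: "\<bar>x$1\<bar> \<le> 2 \<and> \<bar>x$2\<bar> \<le> 2 \<longrightarrow> a = soft_clip' d ?u / ?A \<and> p = 0"
  proof
    assume "\<bar>x$1\<bar> \<le> 2 \<and> \<bar>x$2\<bar> \<le> 2"
    then have "\<bar>x$i\<bar> \<le> 2" "\<bar>x$j\<bar> \<le> 2"
      using exhaust_2_cases[of i] exhaust_2_cases[of j] by auto
    then show "a = soft_clip' d ?u / ?A \<and> p = 0"
      using cutoff_props(6) by (auto simp: a_def p_def)
  qed
  show ?thesis
    by (intro exI[of _ a] exI[of _ p] conjI split a_ge a_le p_ge p_le inner)
qed

text \<open>The two transversal terms can only be active simultaneously where \<open>|x\<^sub>1|, |x\<^sub>2| \<le> core\<close>,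
  and there both widths equal \<open>2s\<close>.\<close>

lemma transversal_sum_le:
  "soft_clip' d (x$1 / scale (x$2)) / scale (x$2) + soft_clip' d (x$2 / scale (x$1)) / scale (x$1) \<le> 1 / s"
proof -
  have term_le: "soft_clip' d t / scale y \<le> 1 / scale y" for t y
    using soft_clip_bounds(3)[OF d_pos d_le, of t] scale_pos[of y] by (simp add: divide_right_mono)
  have "1 / scale y \<le> 1 / s" for y
    using scale_props(1)[of y] s_pos by (simp add: frac_le)
  note term_le_inv_s = order_trans[OF term_le this]
  have term_nonneg: "0 \<le> soft_clip' d t / scale y" for t y
    using soft_clip_bounds(2)[OF d_pos d_le, of t] scale_pos[of y] by simp
  show ?thesis
  proof (cases "soft_clip' d (x$1 / scale (x$2)) = 0 \<or> soft_clip' d (x$2 / scale (x$1)) = 0")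
    case True
    then show ?thesis
      using term_le_inv_s[of "x$1 / scale (x$2)" "x$2"] term_le_inv_s[of "x$2 / scale (x$1)" "x$1"]
      by (elim disjE) simp_all
  next
    case False
    have in_core: "\<bar>x$i\<bar> \<le> core" if "soft_clip' d (x$i / scale (x$j)) \<noteq> 0" for i j
    proof -
      have "\<not> 1 + d \<le> \<bar>x$i / scale (x$j)\<bar>"
        using soft_clip_bounds(7)[OF d_pos d_le] that by blast
      then have ratio: "\<bar>x$i / scale (x$j)\<bar> \<le> 1 + d"
        by simp
      have "\<bar>x$i\<bar> = \<bar>x$i / scale (x$j)\<bar> * scale (x$j)"
        using scale_pos[of "x$j"] by (simp add: abs_divide)
      also have "\<dots> \<le> (1 + d) * (2 * s)"
        using ratio scale_props(2)[of "x$j"] scale_pos[of "x$j"] d_pos by (intro mult_mono) auto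
      also have "\<dots> = core"
        by (simp add: core_def)
      finally show ?thesis .
    qed
    have "\<bar>x$1\<bar> \<le> core" "\<bar>x$2\<bar> \<le> core"
      using in_core[of 1 2] in_core[of 2 1] False by blast+
    then have "scale (x$1) = 2 * s" "scale (x$2) = 2 * s"
      by (simp_all add: scale_props(3))
    then have "soft_clip' d (x$1 / scale (x$2)) / scale (x$2) \<le> 1 / (2 * s)"
      and "soft_clip' d (x$2 / scale (x$1)) / scale (x$1) \<le> 1 / (2 * s)"
      using term_le[of "x$1 / scale (x$2)" "x$2"] term_le[of "x$2 / scale (x$1)" "x$1"] by simp_all
    then show ?thesis
      by simp
  qed
qed

lemma abs_divergence_calib_le: "\<bar>divergence calib x\<bar> \<le> 1 / s"
proof -
  obtain a1 p1 where 1: "comp_di 1 2 x = - a1 - p1" "0 \<le> a1"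
      "a1 \<le> soft_clip' d (x$1 / scale (x$2)) / scale (x$2)" "-1 \<le> p1" "p1 \<le> 0"
    using comp_di_split[of 1 2 x] by (elim exE conjE) (rule that)
  obtain a2 p2 where 2: "comp_di 2 1 x = - a2 - p2" "0 \<le> a2"
      "a2 \<le> soft_clip' d (x$2 / scale (x$1)) / scale (x$1)" "-1 \<le> p2" "p2 \<le> 0"
    using comp_di_split[of 2 1 x] by (elim exE conjE) (rule that)
  have "2 \<le> 1 / s"
    using s_le_half s_pos by (simp add: field_simps)
  moreover have "divergence calib x = - (a1 + a2) - (p1 + p2)"
    unfolding divergence_calib 1(1) 2(1) by simp
  ultimately show ?thesis
    using 1(2-5) 2(2-5) transversal_sum_le[of x] by linarith
qed

lemma abs_nth_le_1_of_unit_disc: "x \<in> unit_disc \<Longrightarrow> \<bar>x$k\<bar> \<le> 1"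
  using component_le_norm_cart[of x k] by (auto simp: unit_disc_def)

lemma neg_divergence_calib_unit_disc:
  assumes "x \<in> unit_disc"
  shows "- divergence calib x
    = soft_clip' d (x$1 / scale (x$2)) / scale (x$2) + soft_clip' d (x$2 / scale (x$1)) / scale (x$1)"
proof -
  have small: "\<bar>x$k\<bar> \<le> 2" for k
    using abs_nth_le_1_of_unit_disc[OF assms, of k] by linarith
  obtain a1 p1 where "comp_di 1 2 x = - a1 - p1" "a1 = soft_clip' d (x$1 / scale (x$2)) / scale (x$2) \<and> p1 = 0"
    using comp_di_split[of 1 2 x] small[of 1] small[of 2] by auto
  moreover obtain a2 p2 where "comp_di 2 1 x = - a2 - p2" "a2 = soft_clip' d (x$2 / scale (x$1)) / scale (x$1) \<and> p2 = 0"
    using comp_di_split[of 2 1 x] small[of 1] small[of 2] by auto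
  ultimately show ?thesis
    by (simp add: divergence_calib)
qed

lemma neg_divergence_calib_nonneg: "x \<in> unit_disc \<Longrightarrow> 0 \<le> - divergence calib x"
  unfolding neg_divergence_calib_unit_disc[of x]
  by (intro add_nonneg_nonneg divide_nonneg_pos soft_clip_bounds(2)[OF d_pos d_le] scale_pos)

definition half_side :: real where
  "half_side = sqrt (1 - s\<^sup>2)"

definition half_side' :: real where
  "half_side' = sqrt (1 - (1 + d)\<^sup>2 * s\<^sup>2)"

lemma half_side_bounds:
  "sqrt (1/2) \<le> half_side'" "half_side' \<le> half_side" "half_side \<le> 1" "0 \<le> half_side"
  "0 \<le> half_side'"
proof -
  have "1 \<le> (1 + d)\<^sup>2"
    using d_pos by (intro one_le_power) simp
  then have "s\<^sup>2 \<le> (1 + d)\<^sup>2 * s\<^sup>2"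
    by (simp add: mult_le_cancel_right1)
  moreover have "(1 + d)\<^sup>2 * s\<^sup>2 < 1/8"
    using s_small by (simp add: algebra_simps)
  ultimately show "sqrt (1/2) \<le> half_side'" "half_side' \<le> half_side" "half_side \<le> 1" "0 \<le> half_side"
    "0 \<le> half_side'"
    unfolding half_side_def half_side'_def by (auto intro!: real_sqrt_le_mono)
qed

lemma half_side_squared: "half_side\<^sup>2 = 1 - s\<^sup>2"
  unfolding half_side_def using s_le_half s_pos by (simp add: power_le_one)

lemma core_le_half_side: "core \<le> half_side"
  using core_less half_side_bounds by simp

lemma half_side_diff_le: "half_side - half_side' \<le> d"
proof -
  have "s\<^sup>2 \<le> (1/2)\<^sup>2"
    using s_le_half s_pos by (intro power_mono) auto
  then have s_sq: "s\<^sup>2 \<le> 1/4"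
    by (simp add: power2_eq_square)
  have "half_side'\<^sup>2 = 1 - (1 + d)\<^sup>2 * s\<^sup>2"
    unfolding half_side'_def using s_small by (simp add: algebra_simps)
  then have "half_side\<^sup>2 - half_side'\<^sup>2 = (1 + d)\<^sup>2 * s\<^sup>2 - s\<^sup>2"
    by (simp add: half_side_squared)
  also have "\<dots> = (2 * d + d\<^sup>2) * s\<^sup>2"
    by (simp add: power2_eq_square algebra_simps)
  also have "\<dots> \<le> (3 * d) * (1/4)"
    using d_pos d_le s_sq by (intro mult_mono) (auto simp: power2_eq_square)
  finally have "(half_side - half_side') * (half_side + half_side') \<le> 3 * d / 4"
    by (simp add: power2_eq_square algebra_simps)
  moreover have "1/2 \<le> sqrt (1/2::real)"
    by (rule real_le_rsqrt) (simp add: power2_eq_square)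
  then have "1 \<le> half_side + half_side'"
    using half_side_bounds by linarith
  moreover have "0 \<le> half_side - half_side'"
    using half_side_bounds by simp
  ultimately have "(half_side - half_side') * 1 \<le> 3 * d / 4"
    by (meson mult_left_mono order_trans)
  then show ?thesis
    using d_pos by simp
qed

lemma scale_le_chord_half:
  assumes "\<bar>y\<bar> \<le> half_side'"
  shows "(1 + d) * scale y \<le> chord_half half_side y"
proof (cases "\<bar>y\<bar> \<le> sqrt (1/2)")
  case True
  have "(1 + d) * scale y \<le> (1 + d) * (2 * s)"
    using scale_props(2)[of y] d_pos by simp
  then have core_bound: "(1 + d) * scale y \<le> core"
    by (simp add: core_def mult_ac)
  have "y\<^sup>2 \<le> 1/2"
    using True abs_le_sqrt_iff[of "1/2" y] by simp
  then have "sqrt (1/2) \<le> sqrt (1 - y\<^sup>2)"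
    by (intro real_sqrt_le_mono) simp
  then have "(1 + d) * scale y \<le> sqrt (1 - y\<^sup>2)" "(1 + d) * scale y \<le> half_side"
    using core_bound core_less core_le_half_side by linarith+
  then show ?thesis
    by (simp add: chord_half_def)
next
  case False
  then have scale_y: "scale y = s"
    using scale_props(4)[of y] by simp
  have "\<bar>y\<bar>\<^sup>2 \<le> half_side'\<^sup>2"
    using assms by (intro power_mono) auto
  also have "\<dots> = 1 - (1 + d)\<^sup>2 * s\<^sup>2"
    unfolding half_side'_def using s_small by (simp add: algebra_simps)
  finally have "((1 + d) * s)\<^sup>2 \<le> 1 - y\<^sup>2"
    by (simp add: power_mult_distrib)
  then have "(1 + d) * s \<le> sqrt (1 - y\<^sup>2)"
    using s_pos d_pos by (simp add: real_le_rsqrt)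
  moreover have "(1 + d) * s \<le> core"
    using s_pos d_pos by (simp add: core_def)
  ultimately show ?thesis
    using scale_y core_le_half_side by (simp add: chord_half_def)
qed

lemma comp_on_lines:
  "comp 1 2 (hline (y, t)) = - soft_clip d (t / scale y) * cutoff t * cutoff y"
  "comp 2 1 (vline (y, t)) = - soft_clip d (t / scale y) * cutoff t * cutoff y"
  by (simp_all add: comp_def)

lemma chord_difference:
  assumes "\<bar>y\<bar> \<le> half_side"
  defines "w \<equiv> chord_half half_side y"
  shows "- soft_clip d (w / scale y) * cutoff w * cutoff y - (- soft_clip d (- w / scale y) * cutoff (- w) * cutoff y)
    = - 2 * soft_clip d (w / scale y)"
proof -
  have "0 \<le> w" "w \<le> 1" "\<bar>y\<bar> \<le> 1"
    using chord_half_nonneg[OF half_side_bounds(4,3) assms(1)] assms(1) half_side_bounds(3)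
    by (auto simp: w_def chord_half_def)
  then have "cutoff w = 1" "cutoff (- w) = 1" "cutoff y = 1"
    using cutoff_props(6) by auto
  moreover have "soft_clip d (- w / scale y) = - soft_clip d (w / scale y)"
    using soft_clip_odd(1)[of d "w / scale y"] by simp
  ultimately show ?thesis
    by simp
qed

text \<open>On the chords of length \<open>\<ge> 2 (1 + d) A(y)\<close>, i.e. for \<open>|y| \<le> half_side'\<close>, the clamp is
  saturated at the endpoints.\<close>

lemma chord_integral_ge:
  "4 * half_side' \<le> (\<integral>y. indicator {-half_side..half_side} y
     * (2 * soft_clip d (chord_half half_side y / scale y)) \<partial>lborel)"
proof -
  let ?f = "\<lambda>y. 2 * soft_clip d (chord_half half_side y / scale y)"
  have quotient: "continuous_on UNIV (\<lambda>y. chord_half half_side y / scale y)"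
    unfolding chord_half_def[abs_def] using scale_pos
    by (intro continuous_intros continuous_on_DERIV[OF scale_DERIV]) (auto simp: less_imp_neq[symmetric])
  have clip: "continuous_on UNIV (soft_clip d)"
    using d_pos by (intro continuous_on_DERIV[OF soft_clip_DERIV]) simp
  have "continuous_on UNIV (\<lambda>y. soft_clip d (chord_half half_side y / scale y))"
    by (rule continuous_on_compose2[OF clip quotient]) simp
  then have f_cont: "continuous_on UNIV ?f"
    by (intro continuous_on_mult continuous_on_const)
  have "(\<integral>y. indicator {-half_side'..half_side'} y * 2 \<partial>lborel)
      \<le> (\<integral>y. indicator {-half_side..half_side} y * ?f y \<partial>lborel)"
  proof (rule integral_mono)
    show "integrable lborel (\<lambda>y. indicator {-half_side'..half_side'} y * (2::real))"
      by (intro integrable_mult_left integrable_real_indicator) (auto simp: emeasure_lborel_Icc_eq)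
    have "integrable lborel (\<lambda>y. indicator {-half_side..half_side} y *\<^sub>R ?f y)"
      by (intro borel_integrable_compact compact_Icc continuous_on_subset[OF f_cont]) simp
    then show "integrable lborel (\<lambda>y. indicator {-half_side..half_side} y * ?f y)"
      by simp
    show "indicator {-half_side'..half_side'} y * 2 \<le> indicator {-half_side..half_side} y * ?f y" for y
    proof (cases "\<bar>y\<bar> \<le> half_side'")
      case True
      then have "\<bar>y\<bar> \<le> half_side"
        using half_side_bounds by linarith
      moreover have "1 + d \<le> chord_half half_side y / scale y"
        using scale_le_chord_half[OF True] scale_pos[of y] by (simp add: le_divide_eq)
      then have "soft_clip d (chord_half half_side y / scale y) = 1"
        by (rule soft_clip_bounds(8)[OF d_pos d_le])
      ultimately show ?thesis
        using True by (simp add: indicator_def abs_le_iff)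
    next
      case False
      have "0 \<le> soft_clip d (chord_half half_side y / scale y)" if "\<bar>y\<bar> \<le> half_side"
        using chord_half_nonneg[OF half_side_bounds(4,3) that] scale_pos[of y]
        by (intro soft_clip_bounds(4)[OF d_pos d_le]) simp
      then show ?thesis
        using False by (auto simp: indicator_def abs_le_iff)
    qed
  qed
  moreover have "(\<integral>y. indicator {-half_side'..half_side'} y * 2 \<partial>lborel) = 4 * half_side'"
    using half_side_bounds(5) by simp
  ultimately show ?thesis
    by simp
qed

lemma integral_clipped_disc_comp_di:
  defines "J \<equiv> (\<integral>y. indicator {-half_side..half_side} y * (2 * soft_clip d (chord_half half_side y / scale y)) \<partial>lborel)"
  shows "(\<integral>x. indicator (clipped_disc half_side) x * comp_di 1 2 x \<partial>lebesgue) = - J"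
    and "(\<integral>x. indicator (clipped_disc half_side) x * comp_di 2 1 x \<partial>lebesgue) = - J"
proof -
  have chord_integrand:
    "indicator {-half_side..half_side} y * (- soft_clip d (w / scale y) * cutoff w * cutoff y
       - (- soft_clip d (- w / scale y) * cutoff (- w) * cutoff y))
     = - (indicator {-half_side..half_side} y * (2 * soft_clip d (chord_half half_side y / scale y)))"
    if "w = chord_half half_side y" for y w
    using chord_difference[of y] that by (cases "\<bar>y\<bar> \<le> half_side") (auto simp: indicator_def abs_le_iff)
  have "(\<integral>x. indicator (clipped_disc half_side) x * comp_di 1 2 x \<partial>lebesgue)
      = (\<integral>y. indicator {-half_side..half_side} y
          * (comp 1 2 (hline (y, chord_half half_side y)) - comp 1 2 (hline (y, - chord_half half_side y))) \<partial>lborel)"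
    by (rule integral_clipped_disc_deriv1[OF half_side_bounds(4,3) comp_has_derivative _ continuous_on_comp_di])
      (simp add: axis_def)
  then show "(\<integral>x. indicator (clipped_disc half_side) x * comp_di 1 2 x \<partial>lebesgue) = - J"
    unfolding J_def comp_on_lines chord_integrand[OF refl] integral_minus .
  have "(comp 2 1 has_derivative (\<lambda>v. comp_di 2 1 x * v$2 + comp_dj 2 1 x * v$1)) (at x)" for x
    using comp_has_derivative .
  then have "(\<integral>x. indicator (clipped_disc half_side) x * comp_di 2 1 x \<partial>lebesgue)
      = (\<integral>y. indicator {-half_side..half_side} y
          * (comp 2 1 (vline (y, chord_half half_side y)) - comp 2 1 (vline (y, - chord_half half_side y))) \<partial>lborel)"
    by (rule integral_clipped_disc_deriv2[OF half_side_bounds(4,3) _ _ continuous_on_comp_di])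
      (simp add: axis_def)
  then show "(\<integral>x. indicator (clipped_disc half_side) x * comp_di 2 1 x \<partial>lebesgue) = - J"
    unfolding J_def comp_on_lines chord_integrand[OF refl] integral_minus .
qed

lemma pairing_clipped_disc_ge:
  "8 * half_side' \<le> - (\<integral>x. indicator (clipped_disc half_side) x * divergence calib x \<partial>lebesgue)"
proof -
  have "(\<integral>x. indicator (clipped_disc half_side) x * divergence calib x \<partial>lebesgue)
      = (\<integral>x. indicator (clipped_disc half_side) x * comp_di 1 2 x
          + indicator (clipped_disc half_side) x * comp_di 2 1 x \<partial>lebesgue)"
    by (simp add: divergence_calib algebra_simps)
  also have "\<dots> = (\<integral>x. indicator (clipped_disc half_side) x * comp_di 1 2 x \<partial>lebesgue)
      + (\<integral>x. indicator (clipped_disc half_side) x * comp_di 2 1 x \<partial>lebesgue)"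
    by (intro Bochner_Integration.integral_add integrable_indicator_times_continuous
        compact_clipped_disc continuous_on_comp_di)
  finally show ?thesis
    using integral_clipped_disc_comp_di chord_integral_ge by simp
qed

definition strips :: "(real^2) set" where
  "strips = cbox (vector [-1, s * (1 - d)]) (vector [1, s]) \<union> cbox (vector [-1, -s]) (vector [1, - (s * (1 - d))])
    \<union> cbox (vector [s * (1 - d), -1]) (vector [s, 1]) \<union> cbox (vector [-s, -1]) (vector [- (s * (1 - d)), 1])"

lemma strips_fmeasurable: "strips \<in> fmeasurable lborel"
  unfolding strips_def by (intro fmeasurable.Un fmeasurable_cbox)

lemma measure_strips_le: "measure lborel strips \<le> 8 * s * d"
proof -
  let ?m = "measure lborel"
  define A :: "(real^2) set" where "A = cbox (vector [-1, s * (1 - d)]) (vector [1, s])"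
  define B :: "(real^2) set" where "B = cbox (vector [-1, -s]) (vector [1, - (s * (1 - d))])"
  define C :: "(real^2) set" where "C = cbox (vector [s * (1 - d), -1]) (vector [s, 1])"
  define D :: "(real^2) set" where "D = cbox (vector [-s, -1]) (vector [- (s * (1 - d)), 1])"
  have le: "s * (1 - d) \<le> s"
    using s_pos d_pos by (simp add: algebra_simps)
  have "?m A = 2 * (s * d)" "?m B = 2 * (s * d)" "?m C = 2 * (s * d)" "?m D = 2 * (s * d)"
    unfolding A_def B_def C_def D_def
    by (subst measure_cbox_vector2; use le in \<open>simp add: algebra_simps\<close>)+
  have "?m strips \<le> ?m (A \<union> B \<union> C) + ?m D"
    unfolding strips_def A_def B_def C_def D_def by (rule measure_Un_le) auto
  also have "\<dots> \<le> ?m (A \<union> B) + ?m C + ?m D"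
    unfolding A_def B_def C_def by (intro add_right_mono measure_Un_le) auto
  also have "\<dots> \<le> ?m A + ?m B + ?m C + ?m D"
    unfolding A_def B_def by (intro add_right_mono measure_Un_le) auto
  also have "\<dots> = 8 * s * d"
    using \<open>?m A = _\<close> \<open>?m B = _\<close> \<open>?m C = _\<close> \<open>?m D = _\<close> by simp
  finally show ?thesis .
qed

lemma neg_divergence_calib_cap:
  assumes x: "x \<in> unit_disc" and ij: "i \<noteq> j"
    and outside: "half_side < \<bar>x$i\<bar>" and transversal: "\<bar>x$j\<bar> < s * (1 - d)"
  shows "- divergence calib x = 1 / s"
proof -
  have "s * (1 - d) \<le> 2 * s * (1 + d)"
    using s_pos d_pos by (simp add: algebra_simps)
  then have scale_j: "scale (x$j) = 2 * s"
    using transversal scale_props(3) by (simp add: core_def)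
  have scale_i: "scale (x$i) = s"
    using scale_props(4) outside half_side_bounds(1,2) by simp
  have "(1 + d) * (2 * s) \<le> \<bar>x$i\<bar>"
    using core_le_half_side outside by (simp add: core_def mult_ac)
  then have "1 + d \<le> \<bar>x$i / scale (x$j)\<bar>"
    using scale_j s_pos by (simp add: abs_divide le_divide_eq)
  then have "soft_clip' d (x$i / scale (x$j)) = 0"
    by (rule soft_clip_bounds(7)[OF d_pos d_le])
  moreover have "\<bar>x$j / scale (x$i)\<bar> \<le> 1 - d"
    using transversal scale_i s_pos by (simp add: abs_divide divide_le_eq mult.commute)
  then have "soft_clip' d (x$j / scale (x$i)) = 1"
    by (rule soft_clip_bounds(6)[OF d_pos d_le])
  ultimately show ?thesis
    unfolding neg_divergence_calib_unit_disc[OF x]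
    using ij exhaust_2_cases[of i] exhaust_2_cases[of j] scale_i by auto
qed

text \<open>Outside the clipped disc one coordinate exceeds \<open>half_side = \<surd>(1 - s\<^sup>2)\<close>, so the other one is
  below \<open>s\<close>; off the strips it is even below \<open>s (1 - d)\<close>.\<close>

lemma neg_divergence_calib_off_strips:
  assumes x: "x \<in> unit_disc - clipped_disc half_side" and "x \<notin> strips"
  shows "- divergence calib x = 1 / s"
proof -
  have disc: "x \<in> unit_disc"
    using x by simp
  have small_other: "\<bar>x$j\<bar> < s * (1 - d)" if "half_side < \<bar>x$i\<bar>" "{i, j} = (UNIV :: 2 set)" for i j
  proof -
    have ij: "i = 1 \<and> j = 2 \<or> i = 2 \<and> j = 1"
      using that(2) exhaust_2_cases[of i] exhaust_2_cases[of j] by (metis UNIV_2 doubleton_eq_iff)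
    then have "(x$i)\<^sup>2 + (x$j)\<^sup>2 \<le> 1"
      using disc by (auto simp: mem_unit_disc_iff add.commute)
    moreover have "half_side\<^sup>2 < (x$i)\<^sup>2"
      using that(1) half_side_bounds(4) by (metis abs_le_square_iff not_le power2_abs abs_of_nonneg)
    ultimately have "(x$j)\<^sup>2 < s\<^sup>2"
      using half_side_squared by simp
    then have "\<bar>x$j\<bar> < s"
      using s_pos by (metis abs_of_pos power2_abs power_less_imp_less_base abs_ge_zero less_imp_le)
    moreover have "\<bar>x$i\<bar> \<le> 1"
      by (rule abs_nth_le_1_of_unit_disc[OF disc])
    ultimately show ?thesis
      using \<open>x \<notin> strips\<close> ij by (auto simp: strips_def mem_cbox_vector2 abs_le_iff abs_less_iff)
  qed
  have "\<not> (\<forall>k. \<bar>x$k\<bar> \<le> half_side)"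
    using x by (auto simp: clipped_disc_def)
  then have "half_side < \<bar>x$1\<bar> \<or> half_side < \<bar>x$2\<bar>"
    by (auto simp: forall_2)
  then show ?thesis
  proof
    assume "half_side < \<bar>x$1\<bar>"
    then show ?thesis
      using neg_divergence_calib_cap[OF disc, of 1 2] small_other[of 1 2] by (simp add: UNIV_2)
  next
    assume "half_side < \<bar>x$2\<bar>"
    then show ?thesis
      using neg_divergence_calib_cap[OF disc, of 2 1] small_other[of 2 1] by (simp add: UNIV_2 insert_commute)
  qed
qed

lemma integrable_caps_divergence:
  "integrable lebesgue (\<lambda>x. indicator (unit_disc - clipped_disc half_side) x * divergence calib x)"
proof -
  have "integrable lebesgue (\<lambda>x. indicator unit_disc x * divergence calib x
      - indicator (clipped_disc half_side) x * divergence calib x)"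
    by (intro Bochner_Integration.integrable_diff integrable_indicator_times_continuous
        compact_unit_disc compact_clipped_disc continuous_on_divergence C1c_field_calib)
  moreover have "(\<lambda>x. indicator unit_disc x * divergence calib x
      - indicator (clipped_disc half_side) x * divergence calib x)
      = (\<lambda>x. indicator (unit_disc - clipped_disc half_side) x * divergence calib x)"
    using clipped_disc_subset[of half_side] by (auto simp: indicator_def fun_eq_iff)
  ultimately show ?thesis
    by simp
qed

lemma pairing_caps_ge:
  "measure lebesgue (unit_disc - clipped_disc half_side) / s - 8 * d
     \<le> - (\<integral>x. indicator (unit_disc - clipped_disc half_side) x * divergence calib x \<partial>lebesgue)"
proof -
  let ?C = "unit_disc - clipped_disc half_side"
  have C: "?C \<in> fmeasurable lborel"
    using fmeasurable_Diff[OF fmeasurable_compact[OF compact_unit_disc], of "clipped_disc half_side"]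
      borel_compact[OF compact_clipped_disc] by simp
  note C_div = integrable_caps_divergence
  have pointwise: "(1/s) * (indicator ?C x - indicator strips x) \<le> indicator ?C x * (- divergence calib x)" for x
    using s_pos neg_divergence_calib_off_strips[of x] neg_divergence_calib_nonneg[of x]
    by (cases "x \<in> ?C"; cases "x \<in> strips") auto
  have "measure lebesgue strips = measure lborel strips"
    using fmeasurableD[OF strips_fmeasurable] by (intro measure_completion) simp
  then have "(1/s) * (measure lebesgue ?C - measure lborel strips)
      = (\<integral>x. (1/s) * (indicator ?C x - indicator strips x) \<partial>lebesgue)"
    using C strips_fmeasurable
    by (simp add: Bochner_Integration.integral_diff integrable_lebesgue_indicator)
  also have "\<dots> \<le> (\<integral>x. indicator ?C x * (- divergence calib x) \<partial>lebesgue)"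
    using C strips_fmeasurable C_div pointwise
    by (intro integral_mono) (auto intro!: integrable_lebesgue_indicator)
  also have "\<dots> = - (\<integral>x. indicator ?C x * divergence calib x \<partial>lebesgue)"
    by simp
  finally have "(1/s) * (measure lebesgue ?C - measure lborel strips)
      \<le> - (\<integral>x. indicator ?C x * divergence calib x \<partial>lebesgue)" .
  moreover have "(1/s) * measure lborel strips \<le> (1/s) * (8 * s * d)"
    using measure_strips_le s_pos by (intro mult_left_mono) auto
  ultimately show ?thesis
    using s_pos by (simp add: right_diff_distrib)
qed

lemma pairing_unit_disc_ge:
  "8 * half_side' + measure lebesgue (unit_disc - clipped_disc half_side) / s - 8 * d
     \<le> - (\<integral>x. indicator unit_disc x * divergence calib x \<partial>lebesgue)"
proof -
  let ?g = "divergence calib" and ?U = "clipped_disc half_side"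
  have "(\<integral>x. indicator unit_disc x * ?g x \<partial>lebesgue)
      = (\<integral>x. indicator ?U x * ?g x + indicator (unit_disc - ?U) x * ?g x \<partial>lebesgue)"
    using clipped_disc_subset[of half_side] by (intro Bochner_Integration.integral_cong) (auto simp: indicator_def)
  also have "\<dots> = (\<integral>x. indicator ?U x * ?g x \<partial>lebesgue) + (\<integral>x. indicator (unit_disc - ?U) x * ?g x \<partial>lebesgue)"
    by (intro Bochner_Integration.integral_add integrable_indicator_times_continuous compact_clipped_disc
        continuous_on_divergence C1c_field_calib integrable_caps_divergence)
  finally show ?thesis
    using pairing_clipped_disc_ge pairing_caps_ge by simp
qed

end

section \<open>Minimality of the clipped disc\<close>

lemma calibrationI:
  assumes "0 < s" "8 * s\<^sup>2 < 1" "0 < d" "d \<le> 1/2" "d \<le> (1 - 8 * s\<^sup>2) / 3"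
  shows "calibration s d"
proof
  show "0 < s" "0 < d" "d \<le> 1/2"
    using assms by auto
  let ?r = "8 * s\<^sup>2"
  have "(1 + d)\<^sup>2 = 1 + 2 * d + d * d"
    by (simp add: power2_eq_square algebra_simps)
  also have "\<dots> \<le> 1 + 3 * d"
    using assms(3,4) by (simp add: mult_left_le_one_le)
  also have "\<dots> \<le> 2 - ?r"
    using assms(5) by simp
  finally have "?r * (1 + d)\<^sup>2 \<le> ?r * (2 - ?r)"
    by (intro mult_left_mono) auto
  also have "\<dots> = 1 - (1 - ?r)\<^sup>2"
    by (simp add: power2_eq_square algebra_simps)
  also have "\<dots> < 1"
    using assms(2) by simp
  finally show "8 * s\<^sup>2 * (1 + d)\<^sup>2 < 1" .
qed

text \<open>Pairing with the calibrating field for width \<open>d\<close> gives the bound up to \<open>16 d\<close>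
  (\<open>8 d\<close> lost on the strips, \<open>8 (half_side - half_side')\<close> on the chords); let \<open>d \<rightarrow> 0\<close>.\<close>

lemma energy_ge_clipped_disc:
  fixes v :: "real^2 \<Rightarrow> real"
  assumes s: "0 < s" "8 * s\<^sup>2 < 1" and v: "integrable lebesgue v"
  defines "h \<equiv> sqrt (1 - s\<^sup>2)"
  shows "ereal (8 * h + measure lebesgue (unit_disc - clipped_disc h) / s)
    \<le> energy v (indicator unit_disc) (1 / s)"
proof (rule ereal_le_epsilon2)
  fix e :: real
  assume "0 < e"
  let ?c = "8 * h + measure lebesgue (unit_disc - clipped_disc h) / s"
  let ?E = "energy v (indicator unit_disc) (1 / s)"
  define d where "d = min (min (1/2) ((1 - 8 * s\<^sup>2) / 3)) (e / 16)"
  have "d \<le> 1/2" "d \<le> (1 - 8 * s\<^sup>2) / 3" "d \<le> e / 16"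
    unfolding d_def by (simp_all only: min_le_iff_disj order_refl simp_thms)
  moreover have "0 < d"
    using s \<open>0 < e\<close> by (simp add: d_def)
  ultimately have d: "0 < d" "d \<le> 1/2" "d \<le> (1 - 8 * s\<^sup>2) / 3" "16 * d \<le> e"
    by simp_all
  interpret calibration s d
    using calibrationI[OF s d(1-3)] .
  have "integrable lebesgue (indicator unit_disc :: real^2 \<Rightarrow> real)"
    by (intro integrable_lebesgue_indicator fmeasurable_compact compact_unit_disc)
  from pairing_le_energy[OF C1c_field_calib abs_calib_le abs_divergence_calib_le v this
      integrable_indicator_times_continuous[OF compact_unit_disc continuous_on_divergence[OF C1c_field_calib]]]
  have pairing: "ereal (- (\<integral>x. indicator unit_disc x * divergence calib x \<partial>lebesgue)) \<le> ?E" .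
  have "half_side = h"
    by (simp add: half_side_def h_def)
  then have "?c - 16 * d \<le> - (\<integral>x. indicator unit_disc x * divergence calib x \<partial>lebesgue)"
    using pairing_unit_disc_ge half_side_diff_le by simp
  then have "ereal (?c - 16 * d) \<le> ?E"
    by (intro order_trans[OF _ pairing]) simp
  then have "ereal (?c - 16 * d) + ereal (16 * d) \<le> ?E + ereal (16 * d)"
    by (rule add_right_mono)
  also have "\<dots> \<le> ?E + ereal e"
    using d(4) by (intro add_left_mono) simp
  finally show "ereal ?c \<le> ?E + ereal e"
    by simp
qed

lemma integral_abs_indicator_diff:
  fixes A B :: "'a::euclidean_space set"
  assumes "A \<subseteq> B"
  shows "(\<integral>x. \<bar>indicator A x - indicator B x\<bar> \<partial>lebesgue) = measure lebesgue (B - A)"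
proof -
  have "(\<lambda>x. \<bar>indicator A x - indicator B x\<bar>) = (indicator (B - A) :: 'a \<Rightarrow> real)"
    using assms
    by (auto simp: indicator_def fun_eq_iff)
  then show ?thesis
    by simp
qed

theorem mainTheorem16:
  fixes lam s h :: real and B U :: "(real^2) set"
  assumes "lam > 2 * sqrt 2"
  defines "s \<equiv> 1 / lam"
  defines "h \<equiv> sqrt (1 - s\<^sup>2)"
  defines "B \<equiv> {x :: real^2. norm x \<le> 1}"
  defines "U \<equiv> B \<inter> {x :: real^2. \<forall>i. \<bar>x $ i\<bar> \<le> h}"
  shows "BV (indicator U) \<and>
         (\<forall>v. BV v \<longrightarrow> energy (indicator U) (indicator B) lam \<le> energy v (indicator B) lam)"
proof -
  have lam_pos: "0 < lam"
    using assms(1) real_sqrt_ge_zero[of 2] by linarith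
  have "(2 * sqrt 2)\<^sup>2 < lam\<^sup>2"
    using assms(1) by (intro power_strict_mono) auto
  then have "8 < lam\<^sup>2"
    by (simp add: power_mult_distrib)
  with lam_pos have s: "0 < s" "8 * s\<^sup>2 < 1" and lam_s: "lam = 1 / s"
    by (simp_all add: s_def power_divide field_simps)
  have h: "0 \<le> h" "h \<le> 1"
    using s by (simp_all add: h_def)
  have BU: "B = unit_disc" "U = clipped_disc h"
    by (simp_all add: B_def U_def unit_disc_def clipped_disc_def)
  have "energy (indicator U) (indicator B) lam
      = TV1 (indicator (clipped_disc h)) + ereal (measure lebesgue (unit_disc - clipped_disc h) / s)"
    unfolding energy_def BU integral_abs_indicator_diff[OF clipped_disc_subset] lam_s by simp
  also have "\<dots> \<le> ereal (8 * h) + ereal (measure lebesgue (unit_disc - clipped_disc h) / s)"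
    using TV1_indicator_clipped_disc_le[OF h] by (rule add_right_mono)
  finally have energy_U: "energy (indicator U) (indicator B) lam
      \<le> ereal (8 * h + measure lebesgue (unit_disc - clipped_disc h) / s)"
    by simp
  have "integrable lebesgue (indicator (clipped_disc h) :: real^2 \<Rightarrow> real)"
    by (intro integrable_lebesgue_indicator fmeasurable_compact compact_clipped_disc)
  moreover have "TV1 (indicator (clipped_disc h)) < \<infinity>"
    using TV1_indicator_clipped_disc_le[OF h] by (rule le_less_trans) simp
  ultimately have "BV (indicator U)"
    by (simp add: BV_def BU)
  moreover have "energy (indicator U) (indicator B) lam \<le> energy v (indicator B) lam" if "BV v" for v
    using energy_U energy_ge_clipped_disc[OF s, of v] that
    unfolding BV_def BU lam_s h_def by (meson order_trans)
  ultimately show ?thesis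
    by blast
qed

end
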